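(* Let $\mathcal{I}$ be an $\mathcal{R}$-monoid, let $\mathcal{S} \subseteq \mathcal{P}(\mathbb{N})$ be closed under subsets, and let $\mathcal{L}$ be a class of languages. The following are equivalent: (1) there is a learner $h\in\mathcal I$ that $\mathbf{Txt}\mathbf{G}\mathbf{Caut}_{\mathbf{Tar}}\mathbf{Ex}$-learns every $L\in\mathcal L$ and that is defined on every text $T\in\mathbf{Txt}(\mathcal S)$ (i.e. $\mathbf G(h,T)$ is total); (2) there is a learner $h\in\mathcal I$ that $\mathbf{Txt}\mathbf{Psd}\mathbf{Caut}_{\mathbf{Tar}}\mathbf{Ex}$-learns every $L\in\mathcal L$ and that is defined on every text $T\in\mathbf{Txt}(\mathcal S)$ (i.e. $\mathbf{Psd}(h,T)$ is total).
   Context: Fix an acceptable numbering $(\varphi_e)$ of partial computable functions, $W_e=\mathrm{dom}(\varphi_e)$. A text is a total function $T:\mathbb N\to\mathbb N\cup\{\#\}$, $\mathrm{content}(T)=\mathrm{range}(T)\setminus\{\#\}$, $T[n]=(T(0),\dots,T(n-1))$; $\mathbf{Txt}(L)$ is the set of texts with content $L$, and for $\mathcal S$ closed under subsets $\mathbf{Txt}(\mathcal S)=\bigcup_{S\in\mathcal S}\mathbf{Txt}(S)$. Learners are partial computable functions; $\mathbf G(h,T)(i)=h(T[i])$ and $\mathbf{Psd}(h,T)(i)=h(\mathrm{content}(T[i]),i)$. For total $p:\mathbb N\to\mathbb N$ and a text $T$: $\mathbf{Ex}(p,T)$ iff $\exists n_0\,\forall n\ge n_0: p(n)=p(n_0)\wedge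 W_{p(n_0)}=\mathrm{content}(T)$; $\mathbf{Caut}_{\mathbf{Tar}}(p,T)$ iff for no $n$ is $\mathrm{content}(T)\subsetneq W_{p(n)}$. $h$ $\mathbf{Txt}\beta\delta\mathbf{Ex}$-learns $L$ iff for every $T\in\mathbf{Txt}(L)$, $\beta(h,T)$ is total and $\delta(\beta(h,T),T)$ and $\mathbf{Ex}(\beta(h,T),T)$ hold. $\mathcal R$ is the set of total computable functions; $\mathcal I\subseteq$ (partial computable functions) is an $\mathcal R$-monoid iff $(\mathcal I,\circ)$ is a monoid and $\mathcal R\subseteq\mathcal I$. *)

theory Defs
  imports Main "HOL-Library.Nat_Bijection"
begin

text \<open>A function of arity n is represented as a map on lists of naturals; only
its values on lists of length n are meaningful.\<close>

fun prim_rec_op :: "(nat list \<Rightarrow> nat option) \<Rightarrow> (nat list \<Rightarrow> nat option) \<Rightarrow> nat list \<Rightarrow> nat option" where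
  "prim_rec_op g h [] = None"
| "prim_rec_op g h (k # ys) =
     rec_nat (g ys) (\<lambda>i acc. Option.bind acc (\<lambda>a. h (i # a # ys))) k"

definition mu_op :: "(nat list \<Rightarrow> nat option) \<Rightarrow> nat list \<Rightarrow> nat option" where
  "mu_op f xs =
     (if \<exists>y. f (y # xs) = Some 0 \<and> (\<forall>z<y. f (z # xs) \<noteq> None)
      then Some (LEAST y. f (y # xs) = Some 0 \<and> (\<forall>z<y. f (z # xs) \<noteq> None))
      else None)"

definition comp_op :: "(nat list \<Rightarrow> nat option) \<Rightarrow> (nat list \<Rightarrow> nat option) list \<Rightarrow> nat list \<Rightarrow> nat option" where
  "comp_op g fs xs =
     (if \<forall>f\<in>set fs. f xs \<noteq> None then g (map (\<lambda>f. the (f xs)) fs) else None)"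

inductive partrec :: "nat \<Rightarrow> (nat list \<Rightarrow> nat option) \<Rightarrow> bool" where
  zero: "partrec n (\<lambda>xs. Some 0)"
| succ: "partrec 1 (\<lambda>xs. Some (Suc (hd xs)))"
| proj: "i < n \<Longrightarrow> partrec n (\<lambda>xs. Some (xs ! i))"
| comp: "partrec m g \<Longrightarrow> length fs = m \<Longrightarrow> (\<forall>f\<in>set fs. partrec n f)
          \<Longrightarrow> partrec n (comp_op g fs)"
| prec: "partrec n g \<Longrightarrow> partrec (Suc (Suc n)) h \<Longrightarrow> partrec (Suc n) (prim_rec_op g h)"
| mu: "partrec (Suc n) f \<Longrightarrow> partrec n (mu_op f)"

definition pcomp :: "(nat \<Rightarrow> nat option) \<Rightarrow> bool" where
  "pcomp F \<longleftrightarrow> (\<exists>f. partrec 1 f \<and> (\<forall>x. F x = f [x]))"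

definition pcomp2 :: "(nat \<Rightarrow> nat \<Rightarrow> nat option) \<Rightarrow> bool" where
  "pcomp2 F \<longleftrightarrow> (\<exists>f. partrec 2 f \<and> (\<forall>e x. F e x = f [e, x]))"

definition total_fn :: "(nat \<Rightarrow> nat option) \<Rightarrow> bool" where
  "total_fn F \<longleftrightarrow> (\<forall>x. F x \<noteq> None)"

definition Rfun :: "(nat \<Rightarrow> nat option) set" where
  "Rfun = {F. pcomp F \<and> total_fn F}"

definition acceptable :: "(nat \<Rightarrow> nat \<Rightarrow> nat option) \<Rightarrow> bool" where
  "acceptable \<phi> \<longleftrightarrow> pcomp2 \<phi> \<and>
     (\<forall>\<psi>. pcomp2 \<psi> \<longrightarrow> (\<exists>t\<in>Rfun. \<forall>e. \<phi> (the (t e)) = \<psi> e))"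

definition W :: "(nat \<Rightarrow> nat \<Rightarrow> nat option) \<Rightarrow> nat \<Rightarrow> nat set" where
  "W \<phi> e = dom (\<phi> e)"

definition R_monoid :: "(nat \<Rightarrow> nat option) set \<Rightarrow> bool" where
  "R_monoid I \<longleftrightarrow> (\<forall>f\<in>I. pcomp f) \<and> Some \<in> I \<and>
     (\<forall>f\<in>I. \<forall>g\<in>I. f \<circ>\<^sub>m g \<in> I) \<and> Rfun \<subseteq> I"

text \<open>A text is a total function nat to nat option; None plays the role of the pause symbol.\<close>
type_synonym ntext = "nat \<Rightarrow> nat option"

definition content :: "ntext \<Rightarrow> nat set" where
  "content T = {x. \<exists>i. T i = Some x}"

definition initseg :: "ntext \<Rightarrow> nat \<Rightarrow> nat option list" where
  "initseg T n = map T [0..<n]"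

definition content_list :: "nat option list \<Rightarrow> nat set" where
  "content_list s = {x. Some x \<in> set s}"

definition seq_code :: "nat option list \<Rightarrow> nat" where
  "seq_code s = list_encode (map (\<lambda>c. case c of None \<Rightarrow> 0 | Some x \<Rightarrow> Suc x) s)"

definition set_code :: "nat set \<Rightarrow> nat" where
  "set_code D = (\<Sum>x\<in>D. 2 ^ x)"

definition Gbeta :: "(nat \<Rightarrow> nat option) \<Rightarrow> ntext \<Rightarrow> nat \<Rightarrow> nat option" where
  "Gbeta h T i = h (seq_code (initseg T i))"

definition Psd :: "(nat \<Rightarrow> nat option) \<Rightarrow> ntext \<Rightarrow> nat \<Rightarrow> nat option" where
  "Psd h T i = h (prod_encode (set_code (content_list (initseg T i)), i))"

definition Ex :: "(nat \<Rightarrow> nat \<Rightarrow> nat option) \<Rightarrow> (nat \<Rightarrow> nat) \<Rightarrow> ntext \<Rightarrow> bool" where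
  "Ex \<phi> p T \<longleftrightarrow> (\<exists>n0. \<forall>n\<ge>n0. p n = p n0 \<and> W \<phi> (p n0) = content T)"

definition CautTar :: "(nat \<Rightarrow> nat \<Rightarrow> nat option) \<Rightarrow> (nat \<Rightarrow> nat) \<Rightarrow> ntext \<Rightarrow> bool" where
  "CautTar \<phi> p T \<longleftrightarrow> (\<forall>n. \<not> (content T \<subset> W \<phi> (p n)))"

definition learns_CautEx ::
  "(nat \<Rightarrow> nat \<Rightarrow> nat option) \<Rightarrow> ((nat \<Rightarrow> nat option) \<Rightarrow> ntext \<Rightarrow> nat \<Rightarrow> nat option)
   \<Rightarrow> (nat \<Rightarrow> nat option) \<Rightarrow> nat set \<Rightarrow> bool" where
  "learns_CautEx \<phi> \<beta> h L \<longleftrightarrow>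
     (\<forall>T. content T = L \<longrightarrow>
        (\<forall>i. \<beta> h T i \<noteq> None) \<and>
        CautTar \<phi> (\<lambda>i. the (\<beta> h T i)) T \<and>
        Ex \<phi> (\<lambda>i. the (\<beta> h T i)) T)"

definition defined_on_Txt ::
  "((nat \<Rightarrow> nat option) \<Rightarrow> ntext \<Rightarrow> nat \<Rightarrow> nat option) \<Rightarrow> (nat \<Rightarrow> nat option) \<Rightarrow> nat set set \<Rightarrow> bool" where
  "defined_on_Txt \<beta> h S \<longleftrightarrow> (\<forall>T. content T \<in> S \<longrightarrow> (\<forall>i. \<beta> h T i \<noteq> None))"

end

(*
  A set-driven learner h becomes a full-information learner h o r, where the total recursive r maps
  the code of a sequence to the pair (code of its content, its length).

  Conversely, let h be a full-information learner. On the content D seen so far and the time t,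
  the total recursive r simulates h for t steps and picks the least code c <= t of a sequence
  within D such that no extension of it by a sequence e <= t within D is seen to change the output
  of h (the empty sequence if there is none). Every output of h o r is an output of h on a sequence
  within the content of the text, and that sequence followed by the text is again a text for the
  same language; so totality and target-cautiousness carry over. On a text for L, the least code
  of a locking sequence of h on L is never rejected, while every smaller code eventually stops
  being a candidate; hence h o r converges to the output of h on that locking sequence, which is
  correct. Simulating h for t steps rests on a total recursive stage approximation of every
  partial recursive function, built along its derivation.
*)

theory Submission
  imports Defs
begin

section \<open>Total recursive functions\<close>

definition recursive :: "nat \<Rightarrow> (nat list \<Rightarrow> nat) \<Rightarrow> bool" where
  "recursive n F \<longleftrightarrow> (\<exists>f. partrec n f \<and> (\<forall>xs. length xs = n \<longrightarrow> f xs = Some (F xs)))"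

lemma recursive_cong:
  assumes "recursive m F" "m = n" "\<And>xs. length xs = n \<Longrightarrow> F xs = G xs"
  shows "recursive n G"
  using assms unfolding recursive_def by metis

lemma recursive_zero: "recursive n (\<lambda>xs. 0)"
  unfolding recursive_def using partrec.zero by blast

lemma recursive_proj: "i < n \<Longrightarrow> recursive n (\<lambda>xs. xs ! i)"
  unfolding recursive_def using partrec.proj by blast

lemma recursive_succ: "recursive 1 (\<lambda>xs. Suc (xs ! 0))"
  unfolding recursive_def
  by (rule exI[of _ "\<lambda>xs. Some (Suc (hd xs))"]) (use partrec.succ in \<open>auto simp: length_Suc_conv\<close>)

lemma partrec_list_choice:
  assumes "\<forall>F\<in>set Fs. recursive n F"
  shows "\<exists>fs. length fs = length Fs \<and> (\<forall>f\<in>set fs. partrec n f) \<and>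
     (\<forall>xs. length xs = n \<longrightarrow> map (\<lambda>f. f xs) fs = map (\<lambda>F. Some (F xs)) Fs)"
  using assms
proof (induction Fs)
  case Nil
  then show ?case by auto
next
  case (Cons F Fs)
  then obtain fs where fs: "length fs = length Fs" "\<forall>f\<in>set fs. partrec n f"
     "\<forall>xs. length xs = n \<longrightarrow> map (\<lambda>f. f xs) fs = map (\<lambda>F. Some (F xs)) Fs" by auto
  from Cons.prems obtain f where f: "partrec n f" "\<forall>xs. length xs = n \<longrightarrow> f xs = Some (F xs)"
    unfolding recursive_def by auto
  show ?case
    by (rule exI[of _ "f # fs"]) (use fs f in auto)
qed

lemma recursive_comp:
  assumes "recursive m G" "length Fs = m" "\<forall>F\<in>set Fs. recursive n F"
  shows "recursive n (\<lambda>xs. G (map (\<lambda>F. F xs) Fs))"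
proof -
  obtain fs where fs: "length fs = length Fs" "\<forall>f\<in>set fs. partrec n f"
     "\<forall>xs. length xs = n \<longrightarrow> map (\<lambda>f. f xs) fs = map (\<lambda>F. Some (F xs)) Fs"
    using partrec_list_choice[OF assms(3)] by blast
  obtain g where g: "partrec m g" "\<forall>xs. length xs = m \<longrightarrow> g xs = Some (G xs)"
    using assms(1) unfolding recursive_def by auto
  have "partrec n (comp_op g fs)"
    using partrec.comp[OF g(1) _ fs(2)] fs(1) assms(2) by simp
  moreover have "comp_op g fs xs = Some (G (map (\<lambda>F. F xs) Fs))" if "length xs = n" for xs
  proof -
    have vals: "map (\<lambda>f. f xs) fs = map (\<lambda>F. Some (F xs)) Fs" using fs(3) that by auto
    then have "\<forall>f\<in>set fs. f xs \<noteq> None"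
      by (metis (mono_tags, lifting) image_eqI imageE list.set_map option.distinct(1))
    moreover have "map (\<lambda>f. the (f xs)) fs = map (\<lambda>F. F xs) Fs"
      using arg_cong[OF vals, of "map the"] by (simp add: comp_def)
    ultimately show ?thesis unfolding comp_op_def using g(2) assms(2) by simp
  qed
  ultimately show ?thesis unfolding recursive_def by blast
qed

lemma recursive_comp1:
  assumes "recursive 1 (\<lambda>ys. G (ys!0))" "recursive n A"
  shows "recursive n (\<lambda>xs. G (A xs))"
  using recursive_comp[OF assms(1), of "[A]"] assms(2) by simp

lemma recursive_comp2:
  assumes "recursive 2 (\<lambda>ys. G (ys!0) (ys!1))" "recursive n A" "recursive n B"
  shows "recursive n (\<lambda>xs. G (A xs) (B xs))"
  using recursive_comp[OF assms(1), of "[A,B]"] assms(2,3) by simp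

lemma recursive_comp3:
  assumes "recursive 3 (\<lambda>ys. G (ys!0) (ys!1) (ys!2))" "recursive n A" "recursive n B" "recursive n C"
  shows "recursive n (\<lambda>xs. G (A xs) (B xs) (C xs))"
  using recursive_comp[OF assms(1), of "[A,B,C]"] assms(2,3,4) by (simp add: numeral_3_eq_3)

lemma prim_rec_op_Some:
  assumes "\<And>ys. length ys = n \<Longrightarrow> g ys = Some (G ys)"
    "\<And>zs. length zs = Suc (Suc n) \<Longrightarrow> h zs = Some (H zs)"
    "length ys = n"
  shows "prim_rec_op g h (k # ys) = Some (rec_nat (G ys) (\<lambda>i a. H (i # a # ys)) k)"
  using assms by (induction k) auto

lemma recursive_prim_rec:
  assumes "recursive n G" "recursive (Suc (Suc n)) H"
  shows "recursive (Suc n) (\<lambda>xs. rec_nat (G (tl xs)) (\<lambda>i a. H (i # a # tl xs)) (hd xs))"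
proof -
  obtain g where g: "partrec n g" "\<forall>xs. length xs = n \<longrightarrow> g xs = Some (G xs)"
    using assms(1) unfolding recursive_def by auto
  obtain h where h: "partrec (Suc (Suc n)) h" "\<forall>xs. length xs = Suc (Suc n) \<longrightarrow> h xs = Some (H xs)"
    using assms(2) unfolding recursive_def by auto
  have "prim_rec_op g h xs = Some (rec_nat (G (tl xs)) (\<lambda>i a. H (i # a # tl xs)) (hd xs))"
    if "length xs = Suc n" for xs
    using that prim_rec_op_Some[of n g G h H] g(2) h(2) by (cases xs) auto
  then show ?thesis
    unfolding recursive_def using partrec.prec[OF g(1) h(1)] by blast
qed

lemma recursive_prim_rec2:
  assumes "recursive 1 (\<lambda>ys. G (ys!0))" "recursive 3 (\<lambda>zs. H (zs!0) (zs!1) (zs!2))"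
  shows "recursive 2 (\<lambda>xs. rec_nat (G (xs!1)) (\<lambda>i a. H i a (xs!1)) (xs!0))"
proof -
  have "recursive (Suc 1) (\<lambda>xs. rec_nat ((\<lambda>ys. G (ys!0)) (tl xs))
      (\<lambda>i a. (\<lambda>zs. H (zs!0) (zs!1) (zs!2)) (i # a # tl xs)) (hd xs))"
    by (rule recursive_prim_rec) (use assms in \<open>simp_all add: numeral_3_eq_3\<close>)
  then show ?thesis
    by (rule recursive_cong) (auto simp: numeral_2_eq_2 length_Suc_conv)
qed

lemma recursive_const: "recursive n (\<lambda>xs. c)"
proof (induction c)
  case 0
  then show ?case by (rule recursive_zero)
next
  case (Suc c)
  show ?case using recursive_comp1[OF recursive_succ Suc] .
qed

lemma recursive_add: "recursive 2 (\<lambda>xs. xs!0 + xs!1)"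
proof -
  have "recursive 2 (\<lambda>xs. rec_nat (xs!1) (\<lambda>i a. Suc a) (xs!0))"
    using recursive_prim_rec2[of "\<lambda>y. y" "\<lambda>i a y. Suc a"] recursive_proj[of 0 1]
      recursive_comp1[OF recursive_succ recursive_proj[of 1 3]] by simp
  moreover have "rec_nat y (\<lambda>i a. Suc a) k = k + y" for y k :: nat by (induction k) auto
  ultimately show ?thesis by simp
qed

lemma recursive_mult: "recursive 2 (\<lambda>xs. xs!0 * xs!1)"
proof -
  have "recursive 2 (\<lambda>xs. rec_nat 0 (\<lambda>i a. a + xs!1) (xs!0))"
    using recursive_prim_rec2[of "\<lambda>y. 0" "\<lambda>i a y. a + y"] recursive_zero
      recursive_comp2[OF recursive_add recursive_proj[of 1 3] recursive_proj[of 2 3]] by simp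
  moreover have "rec_nat 0 (\<lambda>i a. a + y) k = k * y" for y k :: nat by (induction k) auto
  ultimately show ?thesis by simp
qed

lemma recursive_pred: "recursive 1 (\<lambda>xs. xs!0 - 1)"
proof -
  have "recursive (Suc 0) (\<lambda>xs. rec_nat ((\<lambda>ys. 0) (tl xs)) (\<lambda>i a. (\<lambda>zs. zs!0) (i # a # tl xs)) (hd xs))"
    by (rule recursive_prim_rec) (auto intro: recursive_zero recursive_proj)
  moreover have "rec_nat 0 (\<lambda>i a. i) k = k - 1" for k :: nat by (induction k) auto
  ultimately have "recursive (Suc 0) (\<lambda>xs. hd xs - 1)" by simp
  then show ?thesis by (rule recursive_cong) (auto simp: length_Suc_conv)
qed

lemma recursive_diff: "recursive 2 (\<lambda>xs. xs!0 - xs!1)"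
proof -
  have "recursive 2 (\<lambda>xs. rec_nat (xs!1) (\<lambda>i a. a - 1) (xs!0))"
    using recursive_prim_rec2[of "\<lambda>y. y" "\<lambda>i a y. a - 1"] recursive_proj[of 0 1]
      recursive_comp1[OF recursive_pred recursive_proj[of 1 3]] by simp
  moreover have "rec_nat y (\<lambda>i a. a - 1) k = y - k" for y k :: nat by (induction k) auto
  ultimately have "recursive 2 (\<lambda>xs. xs!1 - xs!0)" by simp
  from recursive_comp2[OF this recursive_proj[of 1 2] recursive_proj[of 0 2]] show ?thesis by simp
qed

lemma recursive_if_zero: "recursive 3 (\<lambda>xs. if xs!0 = 0 then xs!1 else xs!2)"
proof -
  have "recursive (Suc 2) (\<lambda>xs. rec_nat ((\<lambda>ys. ys!0) (tl xs)) (\<lambda>i a. (\<lambda>zs. zs!3) (i # a # tl xs)) (hd xs))"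
    by (rule recursive_prim_rec) (auto intro: recursive_proj)
  then show ?thesis
    by (rule recursive_cong) (auto simp: numeral_3_eq_3 length_Suc_conv gr0_conv_Suc)
qed

lemma recursive_Suc_comp: "recursive n A \<Longrightarrow> recursive n (\<lambda>xs. Suc (A xs))"
  using recursive_comp1[OF recursive_succ] .

lemma recursive_add_comp: "recursive n A \<Longrightarrow> recursive n B \<Longrightarrow> recursive n (\<lambda>xs. A xs + B xs)"
  using recursive_comp2[OF recursive_add] .

lemma recursive_diff_comp: "recursive n A \<Longrightarrow> recursive n B \<Longrightarrow> recursive n (\<lambda>xs. A xs - B xs)"
  using recursive_comp2[OF recursive_diff] .

lemma recursive_if_zero_comp:
  "recursive n A \<Longrightarrow> recursive n B \<Longrightarrow> recursive n C \<Longrightarrow>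
   recursive n (\<lambda>xs. if A xs = 0 then B xs else C xs)"
  using recursive_comp3[OF recursive_if_zero] .

lemmas recursive_intros =
  recursive_Suc_comp recursive_add_comp recursive_diff_comp recursive_if_zero_comp
  recursive_proj recursive_const

definition bounded_least :: "(nat \<Rightarrow> bool) \<Rightarrow> nat \<Rightarrow> nat" where
  "bounded_least P b = rec_nat 0 (\<lambda>i a. if a < i then a else if P i then i else Suc i) b"

lemma bounded_least_eq: "bounded_least P b = (if \<exists>y<b. P y then LEAST y. P y else b)"
proof (induction b)
  case 0
  then show ?case by (simp add: bounded_least_def)
next
  case (Suc b)
  have step: "bounded_least P (Suc b) =
      (if bounded_least P b < b then bounded_least P b else if P b then b else Suc b)"
    by (simp add: bounded_least_def)
  show ?case
  proof (cases "\<exists>y<b. P y")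
    case True
    then obtain y where "y < b" "P y" by auto
    then have "(LEAST y. P y) < b" by (meson Least_le order.strict_trans1)
    then show ?thesis using Suc True step \<open>y < b\<close> \<open>P y\<close> less_Suc_eq by auto
  next
    case False
    then have "bounded_least P b = b" using Suc.IH by (metis (full_types))
    moreover have "P b \<Longrightarrow> (LEAST y. P y) = b"
      by (rule Least_equality) (use False in \<open>auto simp: not_less[symmetric]\<close>)
    ultimately show ?thesis using step False
      by (cases "P b") (auto simp: less_Suc_eq)
  qed
qed

lemma bounded_least_less_iff: "bounded_least P b < b \<longleftrightarrow> (\<exists>y<b. P y)"
proof -
  have "\<exists>y<b. P y \<Longrightarrow> (LEAST y. P y) < b" by (meson Least_le order.strict_trans1)
  then show ?thesis by (auto simp: bounded_least_eq)
qed

lemma bounded_least_found: "bounded_least P b < b \<Longrightarrow> P (bounded_least P b)"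
  by (metis bounded_least_eq LeastI nat_less_le)

lemma bounded_least_min: "y < bounded_least P b \<Longrightarrow> \<not> P y"
  by (metis bounded_least_eq not_less_Least)

lemma bounded_least_eqI: "P y \<Longrightarrow> y < b \<Longrightarrow> (\<And>z. z < y \<Longrightarrow> \<not> P z) \<Longrightarrow> bounded_least P b = y"
proof -
  assume "P y" "y < b" "\<And>z. z < y \<Longrightarrow> \<not> P z"
  then have "(LEAST y. P y) = y" by (metis Least_equality not_less)
  then show ?thesis using \<open>P y\<close> \<open>y < b\<close> by (auto simp: bounded_least_eq)
qed

lemma if_1_0_nonzero_iff [simp]:
  "((if P then 1 else 0::nat) \<noteq> 0) = P" "(0 < (if P then 1 else 0::nat)) = P"
  by auto

lemma recursive_less: "recursive 2 (\<lambda>xs. if xs!0 < xs!1 then 1 else 0)"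
proof -
  have "recursive 2 (\<lambda>xs. if xs!1 - xs!0 = 0 then 0 else 1)"
    by (rule recursive_comp3[OF recursive_if_zero]) (auto intro!: recursive_intros)
  then show ?thesis by (rule recursive_cong) auto
qed

lemma recursive_bounded_least:
  assumes "recursive 2 (\<lambda>xs. p (xs!0) (xs!1))"
  shows "recursive 2 (\<lambda>xs. bounded_least (\<lambda>y. p y (xs!1) \<noteq> 0) (xs!0))"
proof -
  have less: "recursive 3 (\<lambda>zs. if zs!1 < zs!0 then 1 else 0)"
    by (rule recursive_comp2[OF recursive_less]) (auto intro: recursive_proj)
  have p: "recursive 3 (\<lambda>zs. p (zs!0) (zs!2))"
    by (rule recursive_comp2[OF assms]) (auto intro: recursive_proj)
  have test: "recursive 3 (\<lambda>zs. if p (zs!0) (zs!2) = 0 then Suc (zs!0) else zs!0)"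
    by (rule recursive_comp3[OF recursive_if_zero p]) (auto intro!: recursive_intros)
  have "recursive 3 (\<lambda>zs. if (if zs!1 < zs!0 then 1 else 0) = (0::nat)
      then (if p (zs!0) (zs!2) = 0 then Suc (zs!0) else zs!0) else zs!1)"
    by (rule recursive_comp3[OF recursive_if_zero less test]) (auto intro: recursive_proj)
  then have step: "recursive 3 (\<lambda>zs. if zs!1 < zs!0 then zs!1
      else if p (zs!0) (zs!2) \<noteq> 0 then zs!0 else Suc (zs!0))"
    by (rule recursive_cong) auto
  have "recursive 2 (\<lambda>xs. rec_nat ((\<lambda>y. 0) (xs!1))
      (\<lambda>i a. (\<lambda>i a x. if a < i then a else if p i x \<noteq> 0 then i else Suc i) i a (xs!1)) (xs!0))"
    by (rule recursive_prim_rec2) (use step recursive_zero in simp_all)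
  then show ?thesis unfolding bounded_least_def by (simp only:)
qed

definition nfst :: "nat \<Rightarrow> nat" where "nfst x = fst (prod_decode x)"
definition nsnd :: "nat \<Rightarrow> nat" where "nsnd x = snd (prod_decode x)"
abbreviation npair :: "nat \<Rightarrow> nat \<Rightarrow> nat" where "npair a b \<equiv> prod_encode (a, b)"

lemma nfst_npair [simp]: "nfst (npair a b) = a" by (simp add: nfst_def)
lemma nsnd_npair [simp]: "nsnd (npair a b) = b" by (simp add: nsnd_def)
lemma npair_nfst_nsnd [simp]: "npair (nfst x) (nsnd x) = x" by (simp add: nfst_def nsnd_def)

lemma recursive_triangle: "recursive 1 (\<lambda>xs. triangle (xs!0))"
proof -
  have "recursive (Suc 0) (\<lambda>xs. rec_nat ((\<lambda>ys. 0) (tl xs))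
      (\<lambda>i a. (\<lambda>zs. zs!1 + Suc (zs!0)) (i # a # tl xs)) (hd xs))"
    by (rule recursive_prim_rec) (auto intro!: recursive_intros)
  moreover have "rec_nat 0 (\<lambda>i a. a + Suc i) k = triangle k" for k by (induction k) auto
  ultimately have "recursive (Suc 0) (\<lambda>xs. triangle (hd xs))" by simp
  then show ?thesis by (rule recursive_cong) (auto simp: length_Suc_conv)
qed

lemma recursive_npair: "recursive 2 (\<lambda>xs. npair (xs!0) (xs!1))"
proof -
  have "recursive 2 (\<lambda>xs. triangle (xs!0 + xs!1) + xs!0)"
    by (rule recursive_comp2[OF recursive_add
          recursive_comp1[OF recursive_triangle recursive_add] recursive_proj]) simp
  then show ?thesis by (simp add: prod_encode_def)
qed

lemma mono_triangle: "mono triangle"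
  by (rule mono_iff_le_Suc[THEN iffD2]) simp

text \<open>The diagonal of x = triangle (m + n) + m is found by a bounded search, which makes both
  projections recursive.\<close>

lemma bounded_least_diagonal: "bounded_least (\<lambda>s. x < triangle (Suc s)) (Suc x) = nfst x + nsnd x"
proof -
  obtain m n where mn: "x = npair m n" by (metis npair_nfst_nsnd)
  have x: "x = triangle (m + n) + m" by (simp add: mn prod_encode_def)
  have "triangle (Suc s) \<le> triangle (m + n)" if "s < m + n" for s
    using that by (intro monoD[OF mono_triangle]) simp
  then have "\<not> x < triangle (Suc s)" if "s < m + n" for s using that x by fastforce
  moreover have "k \<le> triangle k" for k by (induction k) auto
  then have "m + n < Suc x" using x by (metis le_add1 le_imp_less_Suc order.trans)
  ultimately have "bounded_least (\<lambda>s. x < triangle (Suc s)) (Suc x) = m + n"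
    by (intro bounded_least_eqI) (simp_all add: x)
  then show ?thesis by (simp add: mn)
qed

definition recursive1 :: "(nat \<Rightarrow> nat) \<Rightarrow> bool" where
  "recursive1 f \<longleftrightarrow> recursive 1 (\<lambda>xs. f (xs!0))"

definition decidable :: "(nat \<Rightarrow> bool) \<Rightarrow> bool" where
  "decidable P \<longleftrightarrow> recursive1 (\<lambda>x. if P x then 1 else 0)"

lemma recursive1_cong: "recursive1 f \<Longrightarrow> (\<And>x. f x = g x) \<Longrightarrow> recursive1 g"
  by (metis ext)

lemma decidable_cong: "decidable P \<Longrightarrow> (\<And>x. P x = Q x) \<Longrightarrow> decidable Q"
  unfolding decidable_def by simp

lemma recursive1_id: "recursive1 (\<lambda>x. x)"
  unfolding recursive1_def by (rule recursive_proj) simp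

lemma recursive1_const: "recursive1 (\<lambda>x. c)"
  unfolding recursive1_def by (rule recursive_const)

lemma recursive1_comp: "recursive1 f \<Longrightarrow> recursive1 g \<Longrightarrow> recursive1 (\<lambda>x. f (g x))"
  unfolding recursive1_def using recursive_comp1 by blast

lemma recursive1_comp2:
  assumes "recursive 2 (\<lambda>ys. F (ys!0) (ys!1))" "recursive1 f" "recursive1 g"
  shows "recursive1 (\<lambda>x. F (f x) (g x))"
  using assms unfolding recursive1_def using recursive_comp2 by blast

lemma recursive1_Suc: "recursive1 f \<Longrightarrow> recursive1 (\<lambda>x. Suc (f x))"
  unfolding recursive1_def using recursive_Suc_comp by blast

lemma recursive1_add: "recursive1 f \<Longrightarrow> recursive1 g \<Longrightarrow> recursive1 (\<lambda>x. f x + g x)"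
  using recursive1_comp2[OF recursive_add] .

lemma recursive1_mult: "recursive1 f \<Longrightarrow> recursive1 g \<Longrightarrow> recursive1 (\<lambda>x. f x * g x)"
  using recursive1_comp2[OF recursive_mult] .

lemma recursive1_diff: "recursive1 f \<Longrightarrow> recursive1 g \<Longrightarrow> recursive1 (\<lambda>x. f x - g x)"
  using recursive1_comp2[OF recursive_diff] .

lemma recursive1_npair: "recursive1 f \<Longrightarrow> recursive1 g \<Longrightarrow> recursive1 (\<lambda>x. npair (f x) (g x))"
  using recursive1_comp2[OF recursive_npair] .

lemma recursive1_if_zero:
  "recursive1 a \<Longrightarrow> recursive1 b \<Longrightarrow> recursive1 c \<Longrightarrow> recursive1 (\<lambda>x. if a x = 0 then b x else c x)"
  unfolding recursive1_def using recursive_if_zero_comp by blast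

lemma recursive1_triangle: "recursive1 f \<Longrightarrow> recursive1 (\<lambda>x. triangle (f x))"
  unfolding recursive1_def using recursive_comp1[OF recursive_triangle] by blast

lemma recursive1_bounded_least_npair:
  assumes "recursive1 p" "recursive1 b"
  shows "recursive1 (\<lambda>x. bounded_least (\<lambda>y. p (npair y x) \<noteq> 0) (b x))"
proof -
  have "recursive 2 (\<lambda>xs. p (npair (xs!0) (xs!1)))"
    using recursive_comp1[OF assms(1)[unfolded recursive1_def] recursive_npair] .
  from recursive_bounded_least[of "\<lambda>y x. p (npair y x)", OF this]
  have "recursive 2 (\<lambda>xs. bounded_least (\<lambda>y. p (npair y (xs ! 1)) \<noteq> 0) (xs ! 0))" .
  from recursive_comp2[OF this assms(2)[unfolded recursive1_def] recursive_proj[of 0 1]]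
  show ?thesis unfolding recursive1_def by simp
qed

lemma recursive1_nfst: "recursive1 nfst" and recursive1_nsnd: "recursive1 nsnd"
proof -
  have "recursive 2 (\<lambda>xs. if xs!1 < triangle (Suc (xs!0)) then 1 else 0)"
    by (rule recursive_comp2[OF recursive_less])
      (auto intro!: recursive_intros recursive_comp1[OF recursive_triangle])
  from recursive_bounded_least[OF this]
  have "recursive 2 (\<lambda>xs. bounded_least (\<lambda>y. xs!1 < triangle (Suc y)) (xs!0))" by simp
  from recursive_comp2[OF this recursive_Suc_comp[OF recursive_proj[of 0 1]] recursive_proj[of 0 1]]
  have diag: "recursive1 (\<lambda>x. nfst x + nsnd x)"
    unfolding recursive1_def bounded_least_diagonal by simp
  have "x - triangle (nfst x + nsnd x) = nfst x" for x
  proof -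
    obtain m n where "x = npair m n" by (metis npair_nfst_nsnd)
    then show ?thesis by (simp only: nfst_npair nsnd_npair) (simp add: prod_encode_def)
  qed
  then show "recursive1 nfst"
    by (rule recursive1_cong[OF recursive1_diff[OF recursive1_id recursive1_triangle[OF diag]]])
  show "recursive1 nsnd"
    by (rule recursive1_cong[OF recursive1_diff[OF diag \<open>recursive1 nfst\<close>]]) simp
qed

lemma recursive1_nfst_comp: "recursive1 f \<Longrightarrow> recursive1 (\<lambda>x. nfst (f x))"
  using recursive1_comp[OF recursive1_nfst] .

lemma recursive1_nsnd_comp: "recursive1 f \<Longrightarrow> recursive1 (\<lambda>x. nsnd (f x))"
  using recursive1_comp[OF recursive1_nsnd] .

lemma recursive1_rec_nat:
  assumes "recursive1 g" "recursive1 h" "recursive1 k"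
  shows "recursive1 (\<lambda>x. rec_nat (g x) (\<lambda>i a. h (npair i (npair a x))) (k x))"
proof -
  have step: "recursive 3 (\<lambda>zs. h (npair (zs!0) (npair (zs!1) (zs!2))))"
    by (rule recursive_comp1[OF assms(2)[unfolded recursive1_def]])
       (auto intro!: recursive_comp2[OF recursive_npair] recursive_proj)
  have "recursive 2 (\<lambda>xs. rec_nat (g (xs!1)) (\<lambda>i a. (\<lambda>i a x. h (npair i (npair a x))) i a (xs!1)) (xs!0))"
    by (rule recursive_prim_rec2) (use step assms(1) in \<open>simp_all add: recursive1_def\<close>)
  from recursive_comp2[OF this assms(3)[unfolded recursive1_def] recursive_proj[of 0 1]]
  show ?thesis unfolding recursive1_def by simp
qed

lemma recursive1_if:
  "decidable P \<Longrightarrow> recursive1 b \<Longrightarrow> recursive1 c \<Longrightarrow> recursive1 (\<lambda>x. if P x then b x else c x)"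
  unfolding decidable_def
  by (rule recursive1_cong[OF recursive1_if_zero[of "\<lambda>x. if P x then 1 else 0" c b]]) auto

lemma decidable_less: "recursive1 f \<Longrightarrow> recursive1 g \<Longrightarrow> decidable (\<lambda>x. f x < g x)"
  unfolding decidable_def using recursive1_comp2[OF recursive_less] .

lemma decidable_le: "recursive1 f \<Longrightarrow> recursive1 g \<Longrightarrow> decidable (\<lambda>x. f x \<le> g x)"
  using decidable_less[of f "\<lambda>x. Suc (g x)"] recursive1_Suc by (simp add: less_Suc_eq_le)

lemma decidable_not: "decidable P \<Longrightarrow> decidable (\<lambda>x. \<not> P x)"
  unfolding decidable_def
  by (rule recursive1_cong[OF recursive1_if_zero[of "\<lambda>x. if P x then 1 else 0" "\<lambda>x. 1" "\<lambda>x. 0"]])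
    (auto simp: recursive1_const)

lemma decidable_and: "decidable P \<Longrightarrow> decidable Q \<Longrightarrow> decidable (\<lambda>x. P x \<and> Q x)"
  unfolding decidable_def
  by (rule recursive1_cong[OF recursive1_mult[of "\<lambda>x. if P x then 1 else 0" "\<lambda>x. if Q x then 1 else 0"]])
    auto

lemma decidable_or: "decidable P \<Longrightarrow> decidable Q \<Longrightarrow> decidable (\<lambda>x. P x \<or> Q x)"
  using decidable_not[OF decidable_and[OF decidable_not decidable_not]] by simp

lemma decidable_eq: "recursive1 f \<Longrightarrow> recursive1 g \<Longrightarrow> decidable (\<lambda>x. f x = g x)"
  using decidable_and[OF decidable_le decidable_le, of f g g f] by (simp add: eq_iff)

lemma recursive1_bounded_least:
  assumes "decidable (\<lambda>z. P (nfst z) (nsnd z))" "recursive1 b"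
  shows "recursive1 (\<lambda>x. bounded_least (\<lambda>y. P y x) (b x))"
  using recursive1_bounded_least_npair[OF assms(1)[unfolded decidable_def] assms(2)] by simp

lemma decidable_bounded_all:
  assumes "decidable (\<lambda>z. P (nfst z) (nsnd z))" "recursive1 b"
  shows "decidable (\<lambda>x. \<forall>y<b x. P y x)"
proof -
  have "recursive1 (\<lambda>x. bounded_least (\<lambda>y. \<not> P y x) (b x))"
    by (rule recursive1_bounded_least[OF decidable_not[OF assms(1)] assms(2)])
  from decidable_not[OF decidable_less[OF this assms(2)]] show ?thesis
    by (rule decidable_cong) (simp add: bounded_least_less_iff)
qed

lemma decidable_bounded_ex:
  assumes "decidable (\<lambda>z. P (nfst z) (nsnd z))" "recursive1 b"
  shows "decidable (\<lambda>x. \<exists>y<b x. P y x)"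
  using decidable_not[OF decidable_bounded_all[OF decidable_not[OF assms(1)] assms(2)]] by simp

lemma recursive1_div: "recursive1 f \<Longrightarrow> recursive1 g \<Longrightarrow> recursive1 (\<lambda>x. f x div g x)"
proof -
  assume f: "recursive1 f" and g: "recursive1 g"
  have "decidable (\<lambda>z. f (nsnd z) < Suc (nfst z) * g (nsnd z))"
    by (intro decidable_less recursive1_comp[OF f] recursive1_mult recursive1_Suc
        recursive1_comp[OF g] recursive1_nfst recursive1_nsnd)
  from recursive1_bounded_least[of "\<lambda>q x. f x < Suc q * g x", OF _ recursive1_Suc[OF f]] this
  have "recursive1 (\<lambda>x. bounded_least (\<lambda>q. f x < Suc q * g x) (Suc (f x)))" by simp
  from recursive1_if_zero[OF g recursive1_const this]
  show ?thesis
  proof (rule recursive1_cong)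
    fix x
    show "(if g x = 0 then 0 else bounded_least (\<lambda>q. f x < Suc q * g x) (Suc (f x))) = f x div g x"
    proof (cases "g x = 0")
      case False
      let ?q = "f x div g x"
      have "f x < Suc ?q * g x"
        using div_mult_mod_eq[of "f x" "g x"] mod_less_divisor[of "g x" "f x"] False
        by (simp only: mult_Suc) linarith
      moreover have "\<not> f x < Suc q * g x" if "q < ?q" for q
      proof -
        have "Suc q * g x \<le> ?q * g x" using that by (intro mult_le_mono1) simp
        also have "\<dots> \<le> f x" by (rule div_times_less_eq_dividend)
        finally show ?thesis by simp
      qed
      moreover have "f x div g x < Suc (f x)" by (simp add: le_imp_less_Suc)
      ultimately show ?thesis using False by (simp add: bounded_least_eqI)
    qed simp
  qed
qed

lemma recursive1_mod:
  assumes f: "recursive1 f" and g: "recursive1 g"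
  shows "recursive1 (\<lambda>x. f x mod g x)"
  by (rule recursive1_cong[OF recursive1_diff[OF f recursive1_mult[OF recursive1_div[OF f g] g]]])
    (simp add: minus_div_mult_eq_mod)

lemma recursive1_power2: "recursive1 f \<Longrightarrow> recursive1 (\<lambda>x. 2 ^ f x)"
proof -
  assume f: "recursive1 f"
  have "recursive1 (\<lambda>x. rec_nat 1 (\<lambda>i a. nfst (nsnd (npair i (npair a x))) + nfst (nsnd (npair i (npair a x)))) (f x))"
    by (rule recursive1_rec_nat[OF recursive1_const _ f])
      (intro recursive1_add recursive1_nfst_comp recursive1_nsnd_comp recursive1_id)
  moreover have "rec_nat 1 (\<lambda>i a. a + a) k = (2::nat) ^ k" for k by (induction k) auto
  ultimately show ?thesis by simp
qed

definition code_hd :: "nat \<Rightarrow> nat" where "code_hd c = nfst (c - 1)"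
definition code_tl :: "nat \<Rightarrow> nat" where "code_tl c = nsnd (c - 1)"
definition code_cons :: "nat \<Rightarrow> nat \<Rightarrow> nat" where "code_cons x c = Suc (npair x c)"
definition code_drop :: "nat \<Rightarrow> nat \<Rightarrow> nat" where "code_drop k c = rec_nat c (\<lambda>i a. code_tl a) k"
definition code_nth :: "nat \<Rightarrow> nat \<Rightarrow> nat" where "code_nth i c = code_hd (code_drop i c)"
definition code_length :: "nat \<Rightarrow> nat" where
  "code_length c = bounded_least (\<lambda>i. code_drop i c = 0) (Suc c)"
definition code_append :: "nat \<Rightarrow> nat \<Rightarrow> nat" where
  "code_append c e = rec_nat e (\<lambda>i a. code_cons (code_nth (code_length c - Suc i) c) a) (code_length c)"

lemma code_cons_list_encode [simp]: "code_cons x (list_encode xs) = list_encode (x # xs)"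
  by (simp add: code_cons_def)

lemma code_hd_Suc_npair [simp]: "code_hd (Suc (npair a b)) = a"
  by (simp add: code_hd_def)

lemma code_tl_Suc_npair [simp]: "code_tl (Suc (npair a b)) = b"
  by (simp add: code_tl_def)

lemma code_tl_list_encode: "code_tl (list_encode xs) = list_encode (tl xs)"
proof (cases xs)
  case Nil
  have "nsnd 0 = 0" using nsnd_npair[of 0 0] by (simp add: prod_encode_def)
  then show ?thesis using Nil by (simp add: code_tl_def)
qed (simp add: code_tl_def)

lemma code_drop_list_encode: "code_drop i (list_encode xs) = list_encode (drop i xs)"
  by (induction i) (auto simp: code_drop_def code_tl_list_encode drop_Suc tl_drop)

lemma code_nth_list_encode: "i < length xs \<Longrightarrow> code_nth i (list_encode xs) = xs ! i"
  by (cases "drop i xs")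
    (auto simp: code_nth_def code_drop_list_encode code_hd_def hd_drop_conv_nth
      simp flip: Cons_nth_drop_Suc)

lemma length_le_list_encode: "length xs \<le> list_encode xs"
proof (induction xs)
  case (Cons x xs)
  then show ?case using le_prod_encode_2[of "list_encode xs" x] by simp
qed simp

lemma list_encode_eq_0_iff [simp]: "list_encode xs = 0 \<longleftrightarrow> xs = []"
  by (cases xs) simp_all

lemma code_length_list_encode: "code_length (list_encode xs) = length xs"
  unfolding code_length_def
  by (rule bounded_least_eqI)
    (simp_all add: code_drop_list_encode le_imp_less_Suc length_le_list_encode)

lemma code_append_list_encode:
  "code_append (list_encode xs) (list_encode ys) = list_encode (xs @ ys)"
proof -
  have "rec_nat (list_encode ys) (\<lambda>i a. code_cons (code_nth (length xs - Suc i) (list_encode xs)) a) i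
      = list_encode (drop (length xs - i) xs @ ys)" if "i \<le> length xs" for i
    using that
  proof (induction i)
    case (Suc i)
    then have "length xs - Suc i < length xs" "Suc (length xs - Suc i) = length xs - i" by auto
    then have "drop (length xs - Suc i) xs = xs ! (length xs - Suc i) # drop (length xs - i) xs"
      by (metis Cons_nth_drop_Suc)
    with Suc show ?case by (simp add: code_nth_list_encode)
  qed simp
  from this[of "length xs"] show ?thesis
    unfolding code_append_def code_length_list_encode by simp
qed

lemma recursive1_code_hd: "recursive1 f \<Longrightarrow> recursive1 (\<lambda>x. code_hd (f x))"
  unfolding code_hd_def by (intro recursive1_nfst_comp recursive1_diff recursive1_const)

lemma recursive1_code_tl: "recursive1 f \<Longrightarrow> recursive1 (\<lambda>x. code_tl (f x))"
  unfolding code_tl_def by (intro recursive1_nsnd_comp recursive1_diff recursive1_const)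

lemma recursive1_code_cons:
  "recursive1 f \<Longrightarrow> recursive1 g \<Longrightarrow> recursive1 (\<lambda>x. code_cons (f x) (g x))"
  unfolding code_cons_def by (intro recursive1_Suc recursive1_npair)

lemma recursive1_code_drop:
  assumes f: "recursive1 f" and g: "recursive1 g"
  shows "recursive1 (\<lambda>x. code_drop (f x) (g x))"
proof -
  have "recursive1 (\<lambda>x. rec_nat (g x) (\<lambda>i a. code_tl (nfst (nsnd (npair i (npair a x))))) (f x))"
    by (rule recursive1_rec_nat[OF g _ f])
      (intro recursive1_code_tl recursive1_nfst_comp recursive1_nsnd_comp recursive1_id)
  then show ?thesis unfolding code_drop_def by simp
qed

lemma recursive1_code_nth:
  "recursive1 f \<Longrightarrow> recursive1 g \<Longrightarrow> recursive1 (\<lambda>x. code_nth (f x) (g x))"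
  unfolding code_nth_def by (intro recursive1_code_hd recursive1_code_drop)

lemma recursive1_code_length:
  assumes f: "recursive1 f"
  shows "recursive1 (\<lambda>x. code_length (f x))"
proof -
  have "decidable (\<lambda>z. code_drop (nfst z) (f (nsnd z)) = 0)"
    by (intro decidable_eq recursive1_code_drop recursive1_comp[OF f] recursive1_nfst
        recursive1_nsnd recursive1_const)
  from recursive1_bounded_least[of "\<lambda>i x. code_drop i (f x) = 0", OF this recursive1_Suc[OF f]]
  show ?thesis unfolding code_length_def .
qed

lemma recursive1_code_append:
  assumes f: "recursive1 f" and g: "recursive1 g"
  shows "recursive1 (\<lambda>x. code_append (f x) (g x))"
proof -
  have "recursive1 (\<lambda>x. rec_nat (g x) (\<lambda>i a. (\<lambda>w. code_cons
      (code_nth (code_length (f (nsnd (nsnd w))) - Suc (nfst w)) (f (nsnd (nsnd w))))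
      (nfst (nsnd w))) (npair i (npair a x))) (code_length (f x)))"
    by (rule recursive1_rec_nat[OF g _ recursive1_code_length[OF f]])
      (intro recursive1_code_cons recursive1_code_nth recursive1_diff recursive1_code_length
        recursive1_Suc recursive1_comp[OF f] recursive1_nfst_comp recursive1_nsnd_comp
        recursive1_nfst recursive1_nsnd recursive1_id)
  then show ?thesis unfolding code_append_def by simp
qed

definition code_member :: "nat \<Rightarrow> nat \<Rightarrow> bool" where
  "code_member x d \<longleftrightarrow> odd (d div 2 ^ x)"

lemma code_member_set_encode: "finite D \<Longrightarrow> code_member x (set_encode D) \<longleftrightarrow> x \<in> D"
  using set_encode_inverse[of D] unfolding code_member_def set_decode_def by blast

lemma decidable_code_member:
  assumes f: "recursive1 f" and g: "recursive1 g"
  shows "decidable (\<lambda>x. code_member (f x) (g x))"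
proof -
  have "decidable (\<lambda>x. (g x div 2 ^ f x) mod 2 = 1)"
    by (intro decidable_eq recursive1_mod recursive1_div recursive1_power2 f g recursive1_const)
  then show ?thesis by (rule decidable_cong) (simp add: code_member_def odd_iff_mod_2_eq_one)
qed

definition seq_decode :: "nat \<Rightarrow> nat option list" where
  "seq_decode c = map (case_nat None Some) (list_decode c)"

lemma seq_code_list_encode: "seq_code s = list_encode (map (case_option 0 Suc) s)"
  unfolding seq_code_def by (metis option.case_eq_if)

lemma seq_code_seq_decode [simp]: "seq_code (seq_decode c) = c"
proof -
  have "case_option 0 Suc (case_nat None Some n) = n" for n by (cases n) simp_all
  then show ?thesis unfolding seq_code_list_encode seq_decode_def by (simp add: comp_def)
qed

lemma seq_decode_seq_code [simp]: "seq_decode (seq_code s) = s"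
proof -
  have "case_nat None Some (case_option 0 Suc c) = c" for c by (cases c) simp_all
  then show ?thesis unfolding seq_code_list_encode seq_decode_def by (simp add: comp_def)
qed

lemma finite_content_list [simp]: "finite (content_list s)"
  by (rule finite_subset[of _ "the ` set s"]) (force simp: content_list_def)+

lemma content_list_append [simp]: "content_list (s @ t) = content_list s \<union> content_list t"
  unfolding content_list_def by auto

lemma content_list_Nil [simp]: "content_list [] = {}"
  unfolding content_list_def by simp

lemma content_list_Cons_None [simp]: "content_list (None # s) = content_list s"
  unfolding content_list_def by auto

lemma content_list_Cons_Some [simp]: "content_list (Some x # s) = insert x (content_list s)"
  unfolding content_list_def by auto

lemma length_seq_code: "code_length (seq_code s) = length s"
  unfolding seq_code_list_encode by (simp add: code_length_list_encode)

lemma code_nth_seq_code: "i < length s \<Longrightarrow> code_nth i (seq_code s) = case_option 0 Suc (s ! i)"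
  unfolding seq_code_list_encode by (simp add: code_nth_list_encode)

lemma code_append_seq_code: "code_append (seq_code s) (seq_code u) = seq_code (s @ u)"
  unfolding seq_code_list_encode by (simp add: code_append_list_encode)

definition content_within :: "nat \<Rightarrow> nat \<Rightarrow> bool" where
  "content_within d c \<longleftrightarrow>
     (\<forall>i<code_length c. code_nth i c = 0 \<or> code_member (code_nth i c - 1) d)"

lemma content_within_iff:
  assumes "finite D"
  shows "content_within (set_encode D) (seq_code s) \<longleftrightarrow> content_list s \<subseteq> D"
proof -
  have "content_within (set_encode D) (seq_code s) \<longleftrightarrow> (\<forall>i<length s. \<forall>x. s!i = Some x \<longrightarrow> x \<in> D)"
    unfolding content_within_def length_seq_code
    by (auto simp: code_nth_seq_code code_member_set_encode[OF assms] split: option.split)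
  also have "\<dots> \<longleftrightarrow> content_list s \<subseteq> D"
    unfolding content_list_def by (auto simp: in_set_conv_nth)
  finally show ?thesis .
qed

lemma decidable_content_within:
  assumes f: "recursive1 f" and g: "recursive1 g"
  shows "decidable (\<lambda>x. content_within (f x) (g x))"
proof -
  have "decidable (\<lambda>z. code_nth (nfst z) (g (nsnd z)) = 0 \<or>
      code_member (code_nth (nfst z) (g (nsnd z)) - 1) (f (nsnd z)))"
    by (intro decidable_or decidable_eq decidable_code_member recursive1_code_nth recursive1_diff
        recursive1_comp[OF f] recursive1_comp[OF g] recursive1_nfst recursive1_nsnd recursive1_const)
  from decidable_bounded_all[of "\<lambda>i x. code_nth i (g x) = 0 \<or> code_member (code_nth i (g x) - 1) (f x)",
      OF this recursive1_code_length[OF g]]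
  show ?thesis unfolding content_within_def .
qed

definition content_code :: "nat \<Rightarrow> nat" where
  "content_code c = rec_nat 0 (\<lambda>i a. if code_nth i c = 0 \<or> code_member (code_nth i c - 1) a
     then a else a + 2 ^ (code_nth i c - 1)) (code_length c)"

lemma content_code_seq_code: "content_code (seq_code s) = set_encode (content_list s)"
proof -
  have "rec_nat 0 (\<lambda>i a. if code_nth i (seq_code s) = 0 \<or> code_member (code_nth i (seq_code s) - 1) a
      then a else a + 2 ^ (code_nth i (seq_code s) - 1)) i = set_encode (content_list (take i s))"
    if "i \<le> length s" for i
    using that
  proof (induction i)
    case (Suc i)
    then show ?case
      by (cases "s ! i")
        (auto simp: code_nth_seq_code take_Suc_conv_app_nth code_member_set_encode insert_absorb)
  qed simp
  from this[of "length s"] show ?thesis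
    unfolding content_code_def length_seq_code by simp
qed

lemma recursive1_content_code: "recursive1 content_code"
proof -
  have "recursive1 (\<lambda>x. rec_nat 0 (\<lambda>i a. (\<lambda>w.
      if code_nth (nfst w) (nsnd (nsnd w)) = 0 \<or> code_member (code_nth (nfst w) (nsnd (nsnd w)) - 1) (nfst (nsnd w))
      then nfst (nsnd w) else nfst (nsnd w) + 2 ^ (code_nth (nfst w) (nsnd (nsnd w)) - 1))
      (npair i (npair a x))) (code_length x))"
    by (rule recursive1_rec_nat[OF recursive1_const _ recursive1_code_length[OF recursive1_id]])
      (intro recursive1_if decidable_or decidable_eq decidable_code_member recursive1_add
        recursive1_power2 recursive1_code_nth recursive1_diff recursive1_nfst_comp
        recursive1_nsnd_comp recursive1_nfst recursive1_nsnd recursive1_id recursive1_const)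
  then show ?thesis unfolding content_code_def[abs_def] nfst_npair nsnd_npair .
qed

section \<open>Stage approximations of partial recursive functions\<close>

text \<open>C (npair s (list_encode xs)) is the guess at stage s for the value of f at xs, where 0 means
  no value yet and Suc y means the value y.\<close>

definition stage_approx :: "nat \<Rightarrow> (nat list \<Rightarrow> nat option) \<Rightarrow> (nat \<Rightarrow> nat) \<Rightarrow> bool" where
  "stage_approx n f C \<longleftrightarrow> recursive1 C \<and>
     (\<forall>xs s y. length xs = n \<longrightarrow> C (npair s (list_encode xs)) = Suc y \<longrightarrow> f xs = Some y) \<and>
     (\<forall>xs y. length xs = n \<longrightarrow> f xs = Some y \<longrightarrow>
        eventually (\<lambda>s. C (npair s (list_encode xs)) = Suc y) sequentially)"

lemma stage_approx_recursive1: "stage_approx n f C \<Longrightarrow> recursive1 C"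
  unfolding stage_approx_def by blast

lemma stage_approx_sound:
  "stage_approx n f C \<Longrightarrow> length xs = n \<Longrightarrow> C (npair s (list_encode xs)) = Suc y \<Longrightarrow> f xs = Some y"
  unfolding stage_approx_def by blast

lemma stage_approx_complete:
  "stage_approx n f C \<Longrightarrow> length xs = n \<Longrightarrow> f xs = Some y \<Longrightarrow>
   eventually (\<lambda>s. C (npair s (list_encode xs)) = Suc y) sequentially"
  unfolding stage_approx_def by blast

lemma stage_approx_zero: "stage_approx n (\<lambda>xs. Some 0) (\<lambda>z. 1)"
  unfolding stage_approx_def by (auto simp: recursive1_const)

lemma stage_approx_succ: "stage_approx 1 (\<lambda>xs. Some (Suc (hd xs))) (\<lambda>z. Suc (Suc (code_hd (nsnd z))))"
  unfolding stage_approx_def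
  by (auto simp: length_Suc_conv intro!: recursive1_Suc recursive1_code_hd recursive1_nsnd)

lemma stage_approx_proj: "i < n \<Longrightarrow> stage_approx n (\<lambda>xs. Some (xs ! i)) (\<lambda>z. Suc (code_nth i (nsnd z)))"
  unfolding stage_approx_def
  by (auto simp: code_nth_list_encode intro!: recursive1_Suc recursive1_code_nth recursive1_nsnd recursive1_const)

lemma recursive1_prod_list:
  "\<forall>F\<in>set Fs. recursive1 F \<Longrightarrow> recursive1 (\<lambda>z. prod_list (map (\<lambda>F. F z) Fs))"
  by (induction Fs) (simp_all add: recursive1_const recursive1_mult)

lemma recursive1_list_encode_map:
  "\<forall>F\<in>set Fs. recursive1 F \<Longrightarrow> recursive1 (\<lambda>z. list_encode (map (\<lambda>F. F z) Fs))"
proof (induction Fs)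
  case Nil
  then show ?case by (simp add: recursive1_const)
next
  case (Cons F Fs)
  then have "recursive1 (\<lambda>z. code_cons (F z) (list_encode (map (\<lambda>F. F z) Fs)))"
    by (intro recursive1_code_cons) auto
  then show ?case by simp
qed

definition comp_stage :: "(nat \<Rightarrow> nat) \<Rightarrow> (nat \<Rightarrow> nat) list \<Rightarrow> nat \<Rightarrow> nat" where
  "comp_stage Cg Cs z = (if prod_list (map (\<lambda>C. C z) Cs) = 0 then 0
     else Cg (npair (nfst z) (list_encode (map (\<lambda>C. C z - 1) Cs))))"

lemma recursive1_comp_stage:
  assumes "recursive1 Cg" and Cs: "\<forall>C\<in>set Cs. recursive1 C"
  shows "recursive1 (comp_stage Cg Cs)"
proof -
  have "\<forall>F\<in>set (map (\<lambda>C z. C z - 1) Cs). recursive1 F"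
    using Cs by (auto intro: recursive1_diff recursive1_const)
  from recursive1_list_encode_map[OF this]
  have "recursive1 (\<lambda>z. list_encode (map (\<lambda>C. C z - 1) Cs))" by (simp add: comp_def)
  then show ?thesis
    unfolding comp_stage_def[abs_def]
    by (intro recursive1_if_zero recursive1_prod_list[OF Cs] recursive1_const
        recursive1_comp[OF \<open>recursive1 Cg\<close>] recursive1_npair recursive1_nfst)
qed

lemma comp_stage_sound:
  assumes g: "stage_approx m g Cg" and "length fs = m" and fs: "\<forall>f\<in>set fs. stage_approx n f (F f)"
    and "length xs = n" and stage: "comp_stage Cg (map F fs) (npair s (list_encode xs)) = Suc y"
  shows "comp_op g fs xs = Some y"
proof -
  let ?z = "npair s (list_encode xs)"
  from stage have converged: "\<forall>f\<in>set fs. F f ?z \<noteq> 0"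
    and Cg_y: "Cg (npair s (list_encode (map (\<lambda>f. F f ?z - 1) fs))) = Suc y"
    unfolding comp_stage_def by (auto simp: prod_list_zero_iff comp_def split: if_splits)
  have vals: "f xs = Some (F f ?z - 1)" if "f \<in> set fs" for f
    using stage_approx_sound[of n f "F f" xs s] converged fs that \<open>length xs = n\<close>
    by (metis Suc_pred' not_gr0)
  have args: "map (\<lambda>f. the (f xs)) fs = map (\<lambda>f. F f ?z - 1) fs"
  proof (rule map_cong[OF refl])
    fix f assume "f \<in> set fs"
    show "the (f xs) = F f ?z - 1" using vals[OF \<open>f \<in> set fs\<close>] by simp
  qed
  have "g (map (\<lambda>f. F f ?z - 1) fs) = Some y"
    using stage_approx_sound[OF g _ Cg_y] \<open>length fs = m\<close> by simp
  then have "g (map (\<lambda>f. the (f xs)) fs) = Some y" unfolding args .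
  moreover have "\<forall>f\<in>set fs. f xs \<noteq> None" using vals by blast
  ultimately show ?thesis unfolding comp_op_def by simp
qed

lemma comp_stage_complete:
  assumes g: "stage_approx m g Cg" and "length fs = m" and fs: "\<forall>f\<in>set fs. stage_approx n f (F f)"
    and "length xs = n" and "comp_op g fs xs = Some y"
  shows "eventually (\<lambda>s. comp_stage Cg (map F fs) (npair s (list_encode xs)) = Suc y) sequentially"
proof -
  from \<open>comp_op g fs xs = Some y\<close> have defined: "\<forall>f\<in>set fs. f xs \<noteq> None"
    and g_y: "g (map (\<lambda>f. the (f xs)) fs) = Some y"
    unfolding comp_op_def by (auto split: if_splits)
  have "eventually (\<lambda>s. \<forall>f\<in>set fs. F f (npair s (list_encode xs)) = Suc (the (f xs))) sequentially"
    using fs defined \<open>length xs = n\<close> stage_approx_complete by (intro eventually_ball_finite) auto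
  moreover have "eventually (\<lambda>s. Cg (npair s (list_encode (map (\<lambda>f. the (f xs)) fs))) = Suc y) sequentially"
    using stage_approx_complete[OF g _ g_y] \<open>length fs = m\<close> by simp
  ultimately show ?thesis
  proof eventually_elim
    case (elim s)
    have args: "map (\<lambda>C. C (npair s (list_encode xs)) - 1) (map F fs) = map (\<lambda>f. the (f xs)) fs"
      unfolding map_map comp_def using elim(1) by (intro map_cong) auto
    have "prod_list (map (\<lambda>C. C (npair s (list_encode xs))) (map F fs)) \<noteq> 0"
      using elim(1) by (auto simp: prod_list_zero_iff)
    then show ?case using elim(2) unfolding comp_stage_def args by simp
  qed
qed

lemma stage_approx_comp:
  assumes "stage_approx m g Cg" and "length fs = m" and "\<forall>f\<in>set fs. stage_approx n f (F f)"
  shows "stage_approx n (comp_op g fs) (comp_stage Cg (map F fs))"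
  unfolding stage_approx_def
proof (intro conjI allI impI)
  show "recursive1 (comp_stage Cg (map F fs))"
    using assms(1,3) by (intro recursive1_comp_stage) (auto intro: stage_approx_recursive1)
next
  fix xs s y
  assume "length xs = n" and "comp_stage Cg (map F fs) (npair s (list_encode xs)) = Suc y"
  then show "comp_op g fs xs = Some y" by (rule comp_stage_sound[OF assms])
next
  fix xs y
  assume "length xs = n" and "comp_op g fs xs = Some y"
  then show "eventually (\<lambda>s. comp_stage Cg (map F fs) (npair s (list_encode xs)) = Suc y) sequentially"
    by (rule comp_stage_complete[OF assms])
qed

definition prim_rec_stage :: "(nat \<Rightarrow> nat) \<Rightarrow> (nat \<Rightarrow> nat) \<Rightarrow> nat \<Rightarrow> nat \<Rightarrow> nat \<Rightarrow> nat" where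
  "prim_rec_stage Cg Ch s c k = rec_nat (Cg (npair s c))
     (\<lambda>i a. if a = 0 then 0 else Ch (npair s (code_cons i (code_cons (a - 1) c)))) k"

lemma prim_rec_stage_sound:
  assumes g: "stage_approx n g Cg" and h: "stage_approx (Suc (Suc n)) h Ch" and "length ys = n"
  shows "prim_rec_stage Cg Ch s (list_encode ys) k = Suc y \<Longrightarrow> prim_rec_op g h (k # ys) = Some y"
proof (induction k arbitrary: y)
  case 0
  then show ?case using stage_approx_sound[OF g \<open>length ys = n\<close>] by (simp add: prim_rec_stage_def)
next
  case (Suc k)
  then obtain a where a: "prim_rec_stage Cg Ch s (list_encode ys) k = Suc a"
    and "Ch (npair s (list_encode (k # a # ys))) = Suc y"
    unfolding prim_rec_stage_def by (auto split: if_splits simp: gr0_conv_Suc code_cons_def)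
  then have "h (k # a # ys) = Some y" using stage_approx_sound[OF h] \<open>length ys = n\<close> by simp
  then show ?case using Suc.IH[OF a] by simp
qed

lemma prim_rec_stage_complete:
  assumes g: "stage_approx n g Cg" and h: "stage_approx (Suc (Suc n)) h Ch" and "length ys = n"
  shows "prim_rec_op g h (k # ys) = Some y \<Longrightarrow>
    eventually (\<lambda>s. prim_rec_stage Cg Ch s (list_encode ys) k = Suc y) sequentially"
proof (induction k arbitrary: y)
  case 0
  then show ?case
    using stage_approx_complete[OF g \<open>length ys = n\<close>] by (simp add: prim_rec_stage_def)
next
  case (Suc k)
  then obtain a where a: "prim_rec_op g h (k # ys) = Some a" and "h (k # a # ys) = Some y"
    by (cases "prim_rec_op g h (k # ys)") auto
  then have "eventually (\<lambda>s. Ch (npair s (list_encode (k # a # ys))) = Suc y) sequentially"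
    using stage_approx_complete[OF h, of "k # a # ys" y] \<open>length ys = n\<close> by (simp del: prim_rec_op.simps)
  with Suc.IH[OF a] show ?case
    by eventually_elim (simp add: prim_rec_stage_def code_cons_def)
qed

lemma stage_approx_prim_rec:
  assumes g: "stage_approx n g Cg" and h: "stage_approx (Suc (Suc n)) h Ch"
  shows "stage_approx (Suc n) (prim_rec_op g h)
    (\<lambda>z. prim_rec_stage Cg Ch (nfst z) (code_tl (nsnd z)) (code_hd (nsnd z)))"
  unfolding stage_approx_def
proof (intro conjI allI impI)
  note rg = stage_approx_recursive1[OF g] and rh = stage_approx_recursive1[OF h]
  have "recursive1 (\<lambda>x. rec_nat (Cg (npair (nfst x) (code_tl (nsnd x))))
     (\<lambda>i a. (\<lambda>w. if nfst (nsnd w) = 0 then 0 else Ch (npair (nfst (nsnd (nsnd w)))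
       (code_cons (nfst w) (code_cons (nfst (nsnd w) - 1) (code_tl (nsnd (nsnd (nsnd w))))))))
       (npair i (npair a x)))
     (code_hd (nsnd x)))"
    by (rule recursive1_rec_nat)
      (intro recursive1_comp[OF rg] recursive1_comp[OF rh] recursive1_if_zero recursive1_npair
        recursive1_code_cons recursive1_diff recursive1_code_tl recursive1_code_hd recursive1_nfst_comp
        recursive1_nsnd_comp recursive1_nfst recursive1_nsnd recursive1_id recursive1_const)+
  then show "recursive1 (\<lambda>z. prim_rec_stage Cg Ch (nfst z) (code_tl (nsnd z)) (code_hd (nsnd z)))"
    unfolding prim_rec_stage_def nfst_npair nsnd_npair .
next
  fix xs :: "nat list" and s y
  assume "length xs = Suc n"
  then obtain k ys where "xs = k # ys" "length ys = n" by (cases xs) auto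
  then show "prim_rec_stage Cg Ch (nfst (npair s (list_encode xs))) (code_tl (nsnd (npair s (list_encode xs))))
      (code_hd (nsnd (npair s (list_encode xs)))) = Suc y \<Longrightarrow> prim_rec_op g h xs = Some y"
    using prim_rec_stage_sound[OF g h] by simp
next
  fix xs :: "nat list" and y
  assume "length xs = Suc n"
  then obtain k ys where "xs = k # ys" "length ys = n" by (cases xs) auto
  then show "prim_rec_op g h xs = Some y \<Longrightarrow> eventually (\<lambda>s. prim_rec_stage Cg Ch
      (nfst (npair s (list_encode xs))) (code_tl (nsnd (npair s (list_encode xs))))
      (code_hd (nsnd (npair s (list_encode xs)))) = Suc y) sequentially"
    using prim_rec_stage_complete[OF g h] by simp
qed

lemma mu_op_eq_Some_iff:
  "mu_op f xs = Some y \<longleftrightarrow> f (y # xs) = Some 0 \<and> (\<forall>z<y. \<exists>v. f (z # xs) = Some (Suc v))"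
proof -
  let ?Q = "\<lambda>y. f (y # xs) = Some 0 \<and> (\<forall>z<y. f (z # xs) \<noteq> None)"
  have "mu_op f xs = Some y \<longleftrightarrow> ?Q y \<and> (\<forall>z<y. \<not> ?Q z)"
  proof
    assume "mu_op f xs = Some y"
    then have ex: "\<exists>y. ?Q y" and y: "y = (LEAST y. ?Q y)" unfolding mu_op_def by (auto split: if_splits)
    show "?Q y \<and> (\<forall>z<y. \<not> ?Q z)"
      unfolding y using LeastI_ex[OF ex] not_less_Least[of _ ?Q] by blast
  next
    assume Q: "?Q y \<and> (\<forall>z<y. \<not> ?Q z)"
    have "(LEAST y. ?Q y) = y"
    proof (rule Least_equality)
      show "?Q y" using Q by blast
      show "y \<le> z" if "?Q z" for z using Q that leI by blast
    qed
    then show "mu_op f xs = Some y" unfolding mu_op_def using Q by auto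
  qed
  also have "\<dots> \<longleftrightarrow> f (y # xs) = Some 0 \<and> (\<forall>z<y. \<exists>v. f (z # xs) = Some (Suc v))"
  proof
    assume Q: "?Q y \<and> (\<forall>z<y. \<not> ?Q z)"
    have "\<exists>v. f (z # xs) = Some (Suc v)" if "z < y" for z
    proof -
      from Q that have "f (z # xs) \<noteq> None" by blast
      then obtain v where v: "f (z # xs) = Some v" by blast
      have "\<forall>z'<z. f (z' # xs) \<noteq> None" using Q that by auto
      moreover have "\<not> ?Q z" using Q that by blast
      ultimately have "v \<noteq> 0" using v by auto
      then show ?thesis using v not0_implies_Suc by blast
    qed
    then show "f (y # xs) = Some 0 \<and> (\<forall>z<y. \<exists>v. f (z # xs) = Some (Suc v))" using Q by blast
  next
    assume R: "f (y # xs) = Some 0 \<and> (\<forall>z<y. \<exists>v. f (z # xs) = Some (Suc v))"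
    then have "?Q y" by auto
    moreover have "\<not> ?Q z" if "z < y" for z using R that by auto
    ultimately show "?Q y \<and> (\<forall>z<y. \<not> ?Q z)" by blast
  qed
  finally show ?thesis .
qed

definition mu_found :: "(nat \<Rightarrow> nat) \<Rightarrow> nat \<Rightarrow> nat \<Rightarrow> nat \<Rightarrow> bool" where
  "mu_found Cf s c y \<longleftrightarrow> Cf (npair s (code_cons y c)) = 1 \<and> (\<forall>w<y. Cf (npair s (code_cons w c)) \<noteq> 0)"

definition mu_stage :: "(nat \<Rightarrow> nat) \<Rightarrow> nat \<Rightarrow> nat" where
  "mu_stage Cf z = (if bounded_least (mu_found Cf (nfst z) (nsnd z)) (nfst z) < nfst z
     then Suc (bounded_least (mu_found Cf (nfst z) (nsnd z)) (nfst z)) else 0)"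

lemma recursive1_mu_stage:
  assumes f: "recursive1 Cf"
  shows "recursive1 (mu_stage Cf)"
proof -
  have "decidable (\<lambda>z. Cf (npair (nfst (nsnd (nsnd z))) (code_cons (nfst z) (nsnd (nsnd (nsnd z))))) \<noteq> 0)"
    by (intro decidable_not decidable_eq recursive1_comp[OF f] recursive1_npair
        recursive1_code_cons recursive1_nfst_comp recursive1_nsnd_comp recursive1_nfst recursive1_nsnd
        recursive1_id recursive1_const)
  from decidable_bounded_all[where P = "\<lambda>w u. Cf (npair (nfst (nsnd u)) (code_cons w (nsnd (nsnd u)))) \<noteq> 0",
      OF this recursive1_nfst]
  have "decidable (\<lambda>u. \<forall>w<nfst u. Cf (npair (nfst (nsnd u)) (code_cons w (nsnd (nsnd u)))) \<noteq> 0)" .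
  moreover have "decidable (\<lambda>u. Cf (npair (nfst (nsnd u)) (code_cons (nfst u) (nsnd (nsnd u)))) = 1)"
    by (intro decidable_eq recursive1_comp[OF f] recursive1_npair recursive1_code_cons recursive1_nfst_comp
        recursive1_nsnd_comp recursive1_nfst recursive1_nsnd recursive1_id recursive1_const)
  ultimately have "decidable (\<lambda>u. (\<lambda>y z. mu_found Cf (nfst z) (nsnd z) y) (nfst u) (nsnd u))"
    unfolding mu_found_def using decidable_and by simp
  from recursive1_bounded_least[where P = "\<lambda>y z. mu_found Cf (nfst z) (nsnd z) y", OF this recursive1_nfst]
  have "recursive1 (\<lambda>z. bounded_least (mu_found Cf (nfst z) (nsnd z)) (nfst z))" .
  then show ?thesis unfolding mu_stage_def[abs_def]
    by (intro recursive1_if decidable_less recursive1_Suc recursive1_nfst recursive1_const)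
qed

lemma mu_stage_sound:
  assumes f: "stage_approx (Suc n) f Cf" and "length xs = n"
    and stage: "mu_stage Cf (npair s (list_encode xs)) = Suc y"
  shows "mu_op f xs = Some y"
proof -
  let ?P = "mu_found Cf s (list_encode xs)"
  from stage have "bounded_least ?P s < s" and y: "y = bounded_least ?P s"
    unfolding mu_stage_def by (auto split: if_splits)
  then have "?P y" and min: "\<And>w. w < y \<Longrightarrow> \<not> ?P w"
    using bounded_least_found bounded_least_min by blast+
  have stage_value: "Cf (npair s (list_encode (w # xs))) = Suc v \<Longrightarrow> f (w # xs) = Some v" for w v
    using stage_approx_sound[OF f] \<open>length xs = n\<close> by simp
  have "\<exists>v. f (w # xs) = Some (Suc v)" if "w < y" for w
  proof -
    have "Cf (npair s (code_cons w (list_encode xs))) \<noteq> 0" using \<open>?P y\<close> that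
      unfolding mu_found_def by blast
    moreover have "Cf (npair s (code_cons w (list_encode xs))) \<noteq> 1"
      using \<open>?P y\<close> that min[OF that] unfolding mu_found_def by auto
    ultimately obtain v where "Cf (npair s (list_encode (w # xs))) = Suc (Suc v)"
      by (metis code_cons_list_encode One_nat_def not0_implies_Suc)
    then show ?thesis using stage_value by blast
  qed
  moreover have "f (y # xs) = Some 0" using \<open>?P y\<close> stage_value unfolding mu_found_def by simp
  ultimately show ?thesis by (simp add: mu_op_eq_Some_iff)
qed

lemma mu_stage_complete:
  assumes f: "stage_approx (Suc n) f Cf" and "length xs = n" and "mu_op f xs = Some y"
  shows "eventually (\<lambda>s. mu_stage Cf (npair s (list_encode xs)) = Suc y) sequentially"
proof -
  from \<open>mu_op f xs = Some y\<close> have f_y: "f (y # xs) = Some 0"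
    and f_less: "\<forall>z<y. \<exists>v. f (z # xs) = Some (Suc v)"
    by (simp_all add: mu_op_eq_Some_iff)
  define v where "v w = the (f (w # xs))" for w
  have v: "f (w # xs) = Some (v w)" if "w \<le> y" for w
    using that f_y f_less by (auto simp: v_def le_less)
  have "v y = 0" using f_y by (simp add: v_def)
  have v_pos: "v w \<noteq> 0" if "w < y" for w using f_less that by (auto simp: v_def)
  have "eventually (\<lambda>s. Cf (npair s (list_encode (w # xs))) = Suc (v w)) sequentially" if "w \<le> y" for w
    using stage_approx_complete[OF f, of "w # xs" "v w"] v[OF that] \<open>length xs = n\<close> by simp
  then have "eventually (\<lambda>s. \<forall>w\<in>{..y}. Cf (npair s (list_encode (w # xs))) = Suc (v w)) sequentially"
    by (intro eventually_ball_finite) auto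
  moreover have "eventually (\<lambda>s. y < s) sequentially" by (rule eventually_gt_at_top)
  ultimately show ?thesis
  proof eventually_elim
    case (elim s)
    then have "mu_found Cf s (list_encode xs) y"
      using \<open>v y = 0\<close> v_pos unfolding mu_found_def by auto
    moreover have "\<not> mu_found Cf s (list_encode xs) w" if "w < y" for w
      using elim(1) v_pos[OF that] that unfolding mu_found_def by auto
    ultimately have "bounded_least (mu_found Cf s (list_encode xs)) s = y"
      using elim(2) by (intro bounded_least_eqI)
    then show ?case using elim(2) unfolding mu_stage_def by simp
  qed
qed

lemma stage_approx_mu:
  assumes "stage_approx (Suc n) f Cf"
  shows "stage_approx n (mu_op f) (mu_stage Cf)"
  unfolding stage_approx_def
  using recursive1_mu_stage[OF stage_approx_recursive1[OF assms]]
    mu_stage_sound[OF assms] mu_stage_complete[OF assms] by blast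

theorem partrec_stage_approx: "partrec n f \<Longrightarrow> \<exists>C. stage_approx n f C"
proof (induction rule: partrec.induct)
  case (zero n)
  then show ?case using stage_approx_zero by blast
next
  case succ
  then show ?case using stage_approx_succ by blast
next
  case (proj i n)
  then show ?case using stage_approx_proj by blast
next
  case (comp m g fs n)
  then obtain Cg F where "stage_approx m g Cg" "\<forall>f\<in>set fs. stage_approx n f (F f)"
    using bchoice[of "set fs" "\<lambda>f C. stage_approx n f C"] by blast
  then show ?case using stage_approx_comp \<open>length fs = m\<close> by blast
next
  case (prec n g h)
  then show ?case using stage_approx_prim_rec by blast
next
  case (mu n f)
  then show ?case using stage_approx_mu by blast
qed

section \<open>Texts and locking sequences\<close>

definition prepend :: "nat option list \<Rightarrow> ntext \<Rightarrow> ntext" where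
  "prepend s T = (\<lambda>i. if i < length s then s ! i else T (i - length s))"

definition canonical_text :: "nat set \<Rightarrow> ntext" where
  "canonical_text A = (\<lambda>i. if i \<in> A then Some i else None)"

lemma content_canonical_text [simp]: "content (canonical_text A) = A"
  unfolding content_def canonical_text_def by auto

lemma length_initseg [simp]: "length (initseg T n) = n"
  by (simp add: initseg_def)

lemma content_eq_UN_initseg: "content T = (\<Union>n. content_list (initseg T n))"
proof
  show "content T \<subseteq> (\<Union>n. content_list (initseg T n))"
  proof
    fix x assume "x \<in> content T"
    then obtain i where "T i = Some x" unfolding content_def by auto
    then have "x \<in> content_list (initseg T (Suc i))"
      unfolding content_list_def initseg_def by (auto intro: image_eqI[of _ _ i])
    then show "x \<in> (\<Union>n. content_list (initseg T n))" by blast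
  qed
  show "(\<Union>n. content_list (initseg T n)) \<subseteq> content T"
    unfolding content_def content_list_def initseg_def by auto
qed

lemma content_list_initseg_subset: "content_list (initseg T n) \<subseteq> content T"
  using content_eq_UN_initseg by blast

lemma content_list_take_subset: "content_list (take n s) \<subseteq> content_list s"
  unfolding content_list_def by (auto dest: in_set_takeD)

lemma eventually_subset_content_initseg:
  assumes "finite F" and "F \<subseteq> content T"
  shows "eventually (\<lambda>t. F \<subseteq> content_list (initseg T t)) sequentially"
proof -
  have "eventually (\<lambda>t. x \<in> content_list (initseg T t)) sequentially" if x: "x \<in> F" for x
  proof -
    obtain i where "T i = Some x" using x assms(2) unfolding content_def by blast
    then have "x \<in> content_list (initseg T t)" if "i < t" for t
      using that unfolding content_list_def initseg_def by (auto intro: image_eqI[of _ _ i])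
    then show ?thesis by (rule eventually_mono[OF eventually_gt_at_top[of i]])
  qed
  then have "eventually (\<lambda>t. \<forall>x\<in>F. x \<in> content_list (initseg T t)) sequentially"
    using assms(1) by (intro eventually_ball_finite) auto
  then show ?thesis by (simp add: subset_iff Ball_def)
qed

lemma content_prepend: "content (prepend s T) = content_list s \<union> content T"
proof
  show "content (prepend s T) \<subseteq> content_list s \<union> content T"
    unfolding content_def content_list_def prepend_def
    by (auto split: if_splits simp: in_set_conv_nth)
next
  show "content_list s \<union> content T \<subseteq> content (prepend s T)"
  proof
    fix x assume "x \<in> content_list s \<union> content T"
    then show "x \<in> content (prepend s T)"
    proof
      assume "x \<in> content_list s"
      then obtain i where "i < length s" "s ! i = Some x"
        unfolding content_list_def by (auto simp: in_set_conv_nth)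
      then show ?thesis unfolding content_def prepend_def by (intro CollectI exI[of _ i]) simp
    next
      assume "x \<in> content T"
      then obtain i where "T i = Some x" unfolding content_def by auto
      then show ?thesis unfolding content_def prepend_def by (intro CollectI exI[of _ "i + length s"]) simp
    qed
  qed
qed

lemma initseg_prepend: "initseg (prepend s T) (length s + n) = s @ initseg T n"
  by (rule nth_equalityI) (auto simp: initseg_def prepend_def nth_append)

lemma initseg_prepend_length: "initseg (prepend s T) (length s) = s"
  using initseg_prepend[of s T 0] by (simp add: initseg_def)

definition limit_text :: "(nat \<Rightarrow> nat option list) \<Rightarrow> ntext" where
  "limit_text seqs i = seqs (Suc i) ! i"

lemma initseg_limit_text:
  assumes extend: "\<And>k. \<exists>u. seqs (Suc k) = seqs k @ u" and long: "\<And>k. k \<le> length (seqs k)"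
    and "n \<le> length (seqs m)"
  shows "initseg (limit_text seqs) n = take n (seqs m)"
proof -
  have prefix: "\<exists>u. seqs m = seqs k @ u" if "k \<le> m" for k m
    using that
  proof (induction m)
    case (Suc m)
    show ?case
    proof (cases "k = Suc m")
      case False
      then obtain u where "seqs m = seqs k @ u" using Suc by (auto simp: le_Suc_eq)
      moreover obtain v where "seqs (Suc m) = seqs m @ v" using extend by blast
      ultimately show ?thesis by auto
    qed simp
  qed simp
  have "limit_text seqs i = seqs m ! i" if "i < length (seqs m)" for i
  proof (cases "Suc i \<le> m")
    case True
    then obtain u where "seqs m = seqs (Suc i) @ u" using prefix by blast
    then show ?thesis unfolding limit_text_def using long[of "Suc i"] by (simp add: nth_append)
  next
    case False
    then obtain u where "seqs (Suc i) = seqs m @ u" using prefix[of m "Suc i"] by auto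
    then show ?thesis unfolding limit_text_def using that by (simp add: nth_append)
  qed
  then show ?thesis
    using \<open>n \<le> length (seqs m)\<close> by (intro nth_equalityI) (auto simp: initseg_def)
qed

text \<open>A locking sequence in the sense of Blum and Blum, for convergence only: no extension within L
  changes the output of g.\<close>

definition locking :: "(nat option list \<Rightarrow> 'a) \<Rightarrow> nat set \<Rightarrow> nat option list \<Rightarrow> bool" where
  "locking g L s \<longleftrightarrow> content_list s \<subseteq> L \<and> (\<forall>u. content_list u \<subseteq> L \<longrightarrow> g (s @ u) = g s)"

text \<open>Otherwise every sequence within L has an extension within L on which g changes its mind;
  iterating these extensions while also listing L yields a text for L on which g does not
  converge.\<close>

lemma locking_sequence_exists:
  assumes converges: "\<And>T. content T = L \<Longrightarrow> \<exists>n0. \<forall>n\<ge>n0. g (initseg T n) = g (initseg T n0)"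
  shows "\<exists>s. locking g L s"
proof (rule ccontr)
  assume "\<nexists>s. locking g L s"
  then obtain ext where ext: "\<And>s. content_list s \<subseteq> L \<Longrightarrow> content_list (ext s) \<subseteq> L \<and> g (s @ ext s) \<noteq> g s"
    unfolding locking_def by metis
  define seqs where "seqs = rec_nat [] (\<lambda>k s. s @ ext s @ [canonical_text L k])"
  have seqs_Suc: "seqs (Suc k) = seqs k @ ext (seqs k) @ [canonical_text L k]" for k
    by (simp add: seqs_def)
  have content_seqs: "content_list (seqs k) \<subseteq> L" for k
    by (induction k) (use ext in \<open>auto simp: seqs_Suc seqs_def canonical_text_def\<close>)
  have long: "k \<le> length (seqs k)" for k
    by (induction k) (auto simp: seqs_Suc seqs_def)
  let ?T = "limit_text seqs"
  have initseg_T: "initseg ?T n = take n (seqs m)" if "n \<le> length (seqs m)" for n m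
    using initseg_limit_text[of seqs, OF _ long that] seqs_Suc by blast
  have "content ?T = L"
  proof
    have "content_list (initseg ?T n) \<subseteq> L" for n
      using initseg_T[OF long, of n] content_list_take_subset[of n "seqs n"] content_seqs[of n] by simp
    then show "content ?T \<subseteq> L" unfolding content_eq_UN_initseg by blast
  next
    show "L \<subseteq> content ?T"
    proof
      fix x assume "x \<in> L"
      then have "x \<in> content_list (seqs (Suc x))"
        by (simp add: seqs_Suc canonical_text_def)
      also have "\<dots> = content_list (initseg ?T (length (seqs (Suc x))))"
        using initseg_T[of "length (seqs (Suc x))" "Suc x"] by simp
      finally show "x \<in> content ?T" using content_list_initseg_subset by blast
    qed
  qed
  then obtain n0 where n0: "\<forall>n\<ge>n0. g (initseg ?T n) = g (initseg ?T n0)" using converges by blast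
  let ?s = "seqs n0"
  have "length (?s @ ext ?s) \<le> length (seqs (Suc n0))" by (simp add: seqs_Suc)
  then have "initseg ?T (length ?s) = ?s" and "initseg ?T (length (?s @ ext ?s)) = ?s @ ext ?s"
    using initseg_T[of _ "Suc n0"] by (simp_all add: seqs_Suc)
  moreover have "n0 \<le> length ?s" "n0 \<le> length (?s @ ext ?s)" using long[of n0] by simp_all
  ultimately have "g (?s @ ext ?s) = g ?s" using n0 by metis
  then show False using ext content_seqs by blast
qed

lemma Gbeta_prepend_length: "Gbeta h (prepend s T) (length s) = h (seq_code s)"
  unfolding Gbeta_def initseg_prepend_length ..

lemma content_prepend_canonical_text:
  "content_list s \<subseteq> A \<Longrightarrow> content (prepend s (canonical_text A)) = A"
  by (auto simp: content_prepend)

lemma Gbeta_total_imp_defined: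
  assumes "\<And>T. content T = A \<Longrightarrow> \<forall>i. Gbeta h T i \<noteq> None" and "content_list s \<subseteq> A"
  shows "h (seq_code s) \<noteq> None"
  using assms(1)[OF content_prepend_canonical_text[OF assms(2)]] by (metis Gbeta_prepend_length)

lemma learns_CautEx_defined:
  "learns_CautEx \<phi> Gbeta h L \<Longrightarrow> content_list s \<subseteq> L \<Longrightarrow> h (seq_code s) \<noteq> None"
  unfolding learns_CautEx_def by (rule Gbeta_total_imp_defined) auto

lemma learns_CautEx_cautious:
  assumes "learns_CautEx \<phi> Gbeta h L" and "content_list s \<subseteq> L"
  shows "\<not> L \<subset> W \<phi> (the (h (seq_code s)))"
proof -
  let ?T = "prepend s (canonical_text L)"
  have "CautTar \<phi> (\<lambda>i. the (Gbeta h ?T i)) ?T"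
    using assms content_prepend_canonical_text unfolding learns_CautEx_def by blast
  then show ?thesis
    unfolding CautTar_def using content_prepend_canonical_text[OF assms(2)]
    by (metis Gbeta_prepend_length)
qed

lemma learns_CautEx_converges:
  assumes learns: "learns_CautEx \<phi> Gbeta h L" and "content T = L"
  shows "\<exists>n0. \<forall>n\<ge>n0. h (seq_code (initseg T n)) = h (seq_code (initseg T n0))"
proof -
  from assms have defined: "\<forall>i. Gbeta h T i \<noteq> None" and "Ex \<phi> (\<lambda>i. the (Gbeta h T i)) T"
    unfolding learns_CautEx_def by blast+
  then obtain n0 where "\<forall>n\<ge>n0. the (Gbeta h T n) = the (Gbeta h T n0)"
    unfolding Ex_def by blast
  then have "\<forall>n\<ge>n0. Gbeta h T n = Gbeta h T n0"
    using defined by (metis option.expand)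
  then show ?thesis unfolding Gbeta_def by blast
qed

lemma locking_output_correct:
  assumes learns: "learns_CautEx \<phi> Gbeta h L" and lock: "locking (\<lambda>s. h (seq_code s)) L s"
  shows "\<exists>a. h (seq_code s) = Some a \<and> W \<phi> a = L"
proof -
  let ?T = "prepend s (canonical_text L)"
  have content_T: "content ?T = L"
    using lock content_prepend_canonical_text unfolding locking_def by blast
  then obtain n0 where n0: "\<forall>n\<ge>n0. the (Gbeta h ?T n) = the (Gbeta h ?T n0)
      \<and> W \<phi> (the (Gbeta h ?T n0)) = L"
    using learns unfolding learns_CautEx_def Ex_def by metis
  have "Gbeta h ?T (length s + n0) = h (seq_code (s @ initseg (canonical_text L) n0))"
    unfolding Gbeta_def initseg_prepend ..
  also have "\<dots> = h (seq_code s)"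
    using lock content_list_initseg_subset[of "canonical_text L" n0] unfolding locking_def by simp
  finally have "W \<phi> (the (h (seq_code s))) = L" using n0 by (metis le_add2)
  moreover have "h (seq_code s) \<noteq> None"
    using learns_CautEx_defined[OF learns] lock unfolding locking_def by blast
  ultimately show ?thesis by auto
qed

section \<open>From set-driven to full-information learners\<close>

lemma recursive1_imp_Rfun: "recursive1 r \<Longrightarrow> (\<lambda>x. Some (r x)) \<in> Rfun"
  unfolding recursive1_def recursive_def Rfun_def pcomp_def total_fn_def
  by (force simp: length_Suc_conv)

lemma set_code_eq_set_encode: "set_code D = set_encode D"
  unfolding set_code_def set_encode_def by simp

definition content_length_code :: "nat \<Rightarrow> nat" where
  "content_length_code c = npair (content_code c) (code_length c)"

lemma recursive1_content_length_code: "recursive1 content_length_code"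
  unfolding content_length_code_def[abs_def]
  by (intro recursive1_npair recursive1_comp[OF recursive1_content_code] recursive1_code_length recursive1_id)

lemma Gbeta_content_length_code: "Gbeta (h \<circ>\<^sub>m (\<lambda>c. Some (content_length_code c))) = Psd h"
  by (intro ext) (simp add: Gbeta_def Psd_def content_length_code_def content_code_seq_code
      length_seq_code set_code_eq_set_encode)

lemma Psd_learner_imp_Gbeta_learner:
  assumes I: "R_monoid I" and "h \<in> I"
    and learns: "\<forall>L\<in>\<L>. learns_CautEx \<phi> Psd h L" and defined: "defined_on_Txt Psd h S"
  shows "\<exists>h\<in>I. (\<forall>L\<in>\<L>. learns_CautEx \<phi> Gbeta h L) \<and> defined_on_Txt Gbeta h S"
proof (intro bexI conjI)
  let ?h = "h \<circ>\<^sub>m (\<lambda>c. Some (content_length_code c))"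
  have "(\<lambda>c. Some (content_length_code c)) \<in> I"
    using recursive1_imp_Rfun[OF recursive1_content_length_code] I unfolding R_monoid_def by auto
  then show "?h \<in> I" using I \<open>h \<in> I\<close> unfolding R_monoid_def by auto
  show "\<forall>L\<in>\<L>. learns_CautEx \<phi> Gbeta ?h L"
    using learns unfolding learns_CautEx_def Gbeta_content_length_code .
  show "defined_on_Txt Gbeta ?h S"
    using defined unfolding defined_on_Txt_def Gbeta_content_length_code .
qed

section \<open>From full-information to set-driven learners\<close>

text \<open>H t c is the value of h at the code c after t simulation steps (0 while h has not yet
  converged, Suc v for the value v), and d is the code of the content seen so far.\<close>

definition mind_change_seen :: "(nat \<Rightarrow> nat \<Rightarrow> nat) \<Rightarrow> nat \<Rightarrow> nat \<Rightarrow> nat \<Rightarrow> bool" where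
  "mind_change_seen H d t c \<longleftrightarrow> (\<exists>e<Suc t. content_within d e \<and>
     H t c \<noteq> 0 \<and> H t (code_append c e) \<noteq> 0 \<and> H t c \<noteq> H t (code_append c e))"

definition locking_candidate :: "(nat \<Rightarrow> nat \<Rightarrow> nat) \<Rightarrow> nat \<Rightarrow> nat \<Rightarrow> nat \<Rightarrow> bool" where
  "locking_candidate H d t c \<longleftrightarrow> content_within d c \<and> \<not> mind_change_seen H d t c"

definition locking_guess :: "(nat \<Rightarrow> nat \<Rightarrow> nat) \<Rightarrow> nat \<Rightarrow> nat" where
  "locking_guess H x =
     (if bounded_least (locking_candidate H (nfst x) (nsnd x)) (Suc (nsnd x)) < Suc (nsnd x)
      then bounded_least (locking_candidate H (nfst x) (nsnd x)) (Suc (nsnd x)) else 0)"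

lemma recursive1_locking_guess:
  assumes H: "\<And>a b. recursive1 a \<Longrightarrow> recursive1 b \<Longrightarrow> recursive1 (\<lambda>x. H (a x) (b x))"
  shows "recursive1 (locking_guess H)"
proof -
  define changed where "changed e u \<longleftrightarrow> content_within (nfst (nsnd u)) e \<and>
    H (nsnd (nsnd u)) (nfst u) \<noteq> 0 \<and> H (nsnd (nsnd u)) (code_append (nfst u) e) \<noteq> 0 \<and>
    H (nsnd (nsnd u)) (nfst u) \<noteq> H (nsnd (nsnd u)) (code_append (nfst u) e)" for e u
  have "decidable (\<lambda>v. changed (nfst v) (nsnd v))"
    unfolding changed_def
    by (intro decidable_and decidable_content_within decidable_not decidable_eq H recursive1_code_append
        recursive1_nfst_comp recursive1_nsnd_comp recursive1_nfst recursive1_nsnd recursive1_id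
        recursive1_const)
  from decidable_bounded_ex[OF this recursive1_Suc[OF recursive1_nsnd_comp[OF recursive1_nsnd]]]
  have "decidable (\<lambda>u. mind_change_seen H (nfst (nsnd u)) (nsnd (nsnd u)) (nfst u))"
    unfolding mind_change_seen_def changed_def .
  then have "decidable (\<lambda>u. locking_candidate H (nfst (nsnd u)) (nsnd (nsnd u)) (nfst u))"
    unfolding locking_candidate_def
    by (intro decidable_and decidable_not decidable_content_within recursive1_nfst_comp recursive1_nsnd
        recursive1_nfst)
  from recursive1_bounded_least[where P = "\<lambda>c x. locking_candidate H (nfst x) (nsnd x) c",
      OF this recursive1_Suc[OF recursive1_nsnd]]
  have "recursive1 (\<lambda>x. bounded_least (locking_candidate H (nfst x) (nsnd x)) (Suc (nsnd x)))" .
  then show ?thesis unfolding locking_guess_def[abs_def]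
    by (intro recursive1_if decidable_less recursive1_Suc recursive1_nsnd recursive1_const)
qed

lemma locking_guess_content:
  assumes "finite D"
  obtains s where "locking_guess H (npair (set_encode D) t) = seq_code s" and "content_list s \<subseteq> D"
proof (cases "bounded_least (locking_candidate H (set_encode D) t) (Suc t) < Suc t")
  case True
  let ?c = "bounded_least (locking_candidate H (set_encode D) t) (Suc t)"
  have "content_within (set_encode D) (seq_code (seq_decode ?c))"
    using bounded_least_found[OF True] unfolding locking_candidate_def by simp
  then have "content_list (seq_decode ?c) \<subseteq> D" using content_within_iff[OF assms] by blast
  moreover have "locking_guess H (npair (set_encode D) t) = seq_code (seq_decode ?c)"
    using True unfolding locking_guess_def by simp
  ultimately show ?thesis using that by blast
next
  case False
  then have "locking_guess H (npair (set_encode D) t) = seq_code []"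
    unfolding locking_guess_def by (simp add: seq_code_def)
  then show ?thesis using that by simp
qed

abbreviation set_driven_guess :: "(nat \<Rightarrow> nat \<Rightarrow> nat) \<Rightarrow> ntext \<Rightarrow> nat \<Rightarrow> nat" where
  "set_driven_guess H T t \<equiv> locking_guess H (npair (set_encode (content_list (initseg T t))) t)"

lemma Psd_locking_guess:
  "Psd (h \<circ>\<^sub>m (\<lambda>x. Some (locking_guess H x))) T t = h (set_driven_guess H T t)"
  by (simp add: Psd_def set_code_eq_set_encode)

lemma set_driven_guess_within:
  obtains s where "set_driven_guess H T t = seq_code s" and "content_list s \<subseteq> content T"
  using locking_guess_content[OF finite_content_list] content_list_initseg_subset by (metis order_trans)

lemma set_driven_guess_defined:
  assumes "\<And>T. content T = A \<Longrightarrow> \<forall>i. Gbeta h T i \<noteq> None" and "content T = A"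
  shows "h (set_driven_guess H T t) \<noteq> None"
  using set_driven_guess_within Gbeta_total_imp_defined assms by metis

lemma set_driven_guess_cautious:
  assumes "learns_CautEx \<phi> Gbeta h L" and "content T = L"
  shows "\<not> L \<subset> W \<phi> (the (h (set_driven_guess H T t)))"
  using set_driven_guess_within learns_CautEx_cautious assms by metis

locale stage_approximation =
  fixes h :: "nat \<Rightarrow> nat option" and H :: "nat \<Rightarrow> nat \<Rightarrow> nat"
  assumes sound: "H t c = Suc v \<Longrightarrow> h c = Some v"
    and complete: "h c = Some v \<Longrightarrow> eventually (\<lambda>t. H t c = Suc v) sequentially"
begin

lemma locking_not_rejected:
  assumes lock: "locking (\<lambda>s. h (seq_code s)) L s" and "D \<subseteq> L" and "finite D"
  shows "\<not> mind_change_seen H (set_encode D) t (seq_code s)"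
proof
  assume "mind_change_seen H (set_encode D) t (seq_code s)"
  then obtain e v1 v2 where e: "content_within (set_encode D) e"
    and v1: "H t (seq_code s) = Suc v1" and v2: "H t (code_append (seq_code s) e) = Suc v2"
    and "v1 \<noteq> v2"
    unfolding mind_change_seen_def by (metis not0_implies_Suc)
  have "content_list (seq_decode e) \<subseteq> L"
    using e content_within_iff[OF \<open>finite D\<close>, of "seq_decode e"] \<open>D \<subseteq> L\<close> by simp
  then have "h (seq_code (s @ seq_decode e)) = h (seq_code s)"
    using lock unfolding locking_def by blast
  moreover have "code_append (seq_code s) e = seq_code (s @ seq_decode e)"
    using code_append_seq_code[of s "seq_decode e"] by simp
  ultimately show False using sound[OF v1] sound[OF v2] \<open>v1 \<noteq> v2\<close> by simp
qed

lemma nonlocking_eventually_rejected: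
  assumes learns: "learns_CautEx \<phi> Gbeta h L" and "content T = L"
    and "content_list s \<subseteq> L" and "\<not> locking (\<lambda>s. h (seq_code s)) L s"
  shows "eventually (\<lambda>t. mind_change_seen H (set_encode (content_list (initseg T t))) t (seq_code s))
    sequentially"
proof -
  obtain u where u: "content_list u \<subseteq> L" and changes: "h (seq_code (s @ u)) \<noteq> h (seq_code s)"
    using assms(3,4) unfolding locking_def by blast
  obtain a1 a2 where a1: "h (seq_code s) = Some a1" and a2: "h (seq_code (s @ u)) = Some a2"
    using learns_CautEx_defined[OF learns] assms(3) u by fastforce
  have "eventually (\<lambda>t. seq_code u < Suc t) sequentially"
    using eventually_ge_at_top[of "seq_code u"] by (auto elim: eventually_mono)
  moreover have "eventually (\<lambda>t. content_list u \<subseteq> content_list (initseg T t)) sequentially"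
    using eventually_subset_content_initseg u \<open>content T = L\<close> by simp
  moreover note complete[OF a1] complete[OF a2]
  ultimately show ?thesis
  proof eventually_elim
    case (elim t)
    then have "content_within (set_encode (content_list (initseg T t))) (seq_code u)"
      using content_within_iff by simp
    moreover have "code_append (seq_code s) (seq_code u) = seq_code (s @ u)"
      by (rule code_append_seq_code)
    ultimately show ?case
      unfolding mind_change_seen_def using elim a1 a2 changes by (intro exI[of _ "seq_code u"]) auto
  qed
qed

lemma eventually_locking_candidate:
  assumes lock: "locking (\<lambda>s. h (seq_code s)) L (seq_decode c)" and "content T = L"
  shows "eventually (\<lambda>t. locking_candidate H (set_encode (content_list (initseg T t))) t c) sequentially"
proof -
  let ?D = "\<lambda>t. content_list (initseg T t)"
  have "eventually (\<lambda>t. content_list (seq_decode c) \<subseteq> ?D t) sequentially"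
    using lock \<open>content T = L\<close> by (intro eventually_subset_content_initseg) (auto simp: locking_def)
  then show ?thesis
  proof (rule eventually_mono)
    fix t assume "content_list (seq_decode c) \<subseteq> ?D t"
    then have "content_within (set_encode (?D t)) c"
      using content_within_iff[of "?D t" "seq_decode c"] by simp
    moreover have "\<not> mind_change_seen H (set_encode (?D t)) t c"
      using locking_not_rejected[OF lock, of "?D t" t] content_list_initseg_subset[of T t]
        \<open>content T = L\<close> by simp
    ultimately show "locking_candidate H (set_encode (?D t)) t c"
      unfolding locking_candidate_def by blast
  qed
qed

lemma eventually_not_locking_candidate:
  assumes learns: "learns_CautEx \<phi> Gbeta h L" and "content T = L"
    and not_lock: "\<not> locking (\<lambda>s. h (seq_code s)) L (seq_decode c)"
  shows "eventually (\<lambda>t. \<not> locking_candidate H (set_encode (content_list (initseg T t))) t c) sequentially"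
proof (cases "content_list (seq_decode c) \<subseteq> L")
  case True
  from nonlocking_eventually_rejected[OF learns \<open>content T = L\<close> True not_lock]
  show ?thesis unfolding locking_candidate_def by (auto elim: eventually_mono)
next
  case False
  then have "\<not> content_within (set_encode (content_list (initseg T t))) c" for t
    using content_within_iff[of "content_list (initseg T t)" "seq_decode c"]
      content_list_initseg_subset[of T t] \<open>content T = L\<close>
    by auto
  then show ?thesis unfolding locking_candidate_def by simp
qed

lemma set_driven_guess_converges:
  assumes learns: "learns_CautEx \<phi> Gbeta h L" and "content T = L"
  shows "Ex \<phi> (\<lambda>t. the (h (set_driven_guess H T t))) T"
proof -
  let ?g = "\<lambda>s. h (seq_code s)" and ?D = "\<lambda>t. content_list (initseg T t)"
  have "\<exists>s. locking ?g L s"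
    by (rule locking_sequence_exists) (use learns_CautEx_converges[OF learns] in blast)
  then have "\<exists>c. locking ?g L (seq_decode c)" by (metis seq_decode_seq_code)
  define c0 where "c0 = (LEAST c. locking ?g L (seq_decode c))"
  have lock: "locking ?g L (seq_decode c0)"
    unfolding c0_def by (rule LeastI_ex) fact
  have "eventually (\<lambda>t. \<not> locking_candidate H (set_encode (?D t)) t c) sequentially" if "c < c0" for c
    using eventually_not_locking_candidate[OF learns \<open>content T = L\<close>]
      not_less_Least[OF that[unfolded c0_def]] by blast
  then have "eventually (\<lambda>t. \<forall>c\<in>{..<c0}. \<not> locking_candidate H (set_encode (?D t)) t c) sequentially"
    by (intro eventually_ball_finite) auto
  moreover note eventually_locking_candidate[OF lock \<open>content T = L\<close>]
  moreover have "eventually (\<lambda>t. c0 < Suc t) sequentially"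
    using eventually_ge_at_top[of c0] by (auto elim: eventually_mono)
  ultimately have "eventually (\<lambda>t. set_driven_guess H T t = c0) sequentially"
  proof eventually_elim
    case (elim t)
    then have "bounded_least (locking_candidate H (set_encode (?D t)) t) (Suc t) = c0"
      by (intro bounded_least_eqI) auto
    then show ?case using elim(3) unfolding locking_guess_def by simp
  qed
  then obtain n0 where n0: "\<forall>t\<ge>n0. set_driven_guess H T t = c0"
    unfolding eventually_sequentially by blast
  obtain a where "h c0 = Some a" and "W \<phi> a = L"
    using locking_output_correct[OF learns lock] by auto
  then show ?thesis unfolding Ex_def using n0 \<open>content T = L\<close> by (intro exI[of _ n0]) auto
qed

lemma Psd_locking_guess_learns:
  assumes learns: "learns_CautEx \<phi> Gbeta h L"
  shows "learns_CautEx \<phi> Psd (h \<circ>\<^sub>m (\<lambda>x. Some (locking_guess H x))) L"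
  unfolding learns_CautEx_def Psd_locking_guess
proof (intro allI impI)
  fix T assume "content T = L"
  have "\<forall>t. h (set_driven_guess H T t) \<noteq> None"
    using set_driven_guess_defined learns \<open>content T = L\<close> unfolding learns_CautEx_def by blast
  moreover have "CautTar \<phi> (\<lambda>t. the (h (set_driven_guess H T t))) T"
    unfolding CautTar_def using set_driven_guess_cautious[OF learns] \<open>content T = L\<close> by blast
  moreover have "Ex \<phi> (\<lambda>t. the (h (set_driven_guess H T t))) T"
    using set_driven_guess_converges[OF learns \<open>content T = L\<close>] .
  ultimately show "(\<forall>t. h (set_driven_guess H T t) \<noteq> None) \<and>
      CautTar \<phi> (\<lambda>t. the (h (set_driven_guess H T t))) T \<and>
      Ex \<phi> (\<lambda>t. the (h (set_driven_guess H T t))) T" by blast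
qed

end

lemma Psd_locking_guess_defined_on_Txt:
  assumes "defined_on_Txt Gbeta h S"
  shows "defined_on_Txt Psd (h \<circ>\<^sub>m (\<lambda>x. Some (locking_guess H x))) S"
  unfolding defined_on_Txt_def Psd_locking_guess
proof (intro allI impI)
  fix T t assume "content T \<in> S"
  then have "\<And>T'. content T' = content T \<Longrightarrow> \<forall>i. Gbeta h T' i \<noteq> None"
    using assms unfolding defined_on_Txt_def by simp
  then show "h (set_driven_guess H T t) \<noteq> None" by (rule set_driven_guess_defined) auto
qed

lemma pcomp_stage_approximation:
  assumes "pcomp h"
  obtains H where "stage_approximation h H"
    and "\<And>a b. recursive1 a \<Longrightarrow> recursive1 b \<Longrightarrow> recursive1 (\<lambda>x. H (a x) (b x))"
proof -
  obtain f where f: "partrec 1 f" and h: "\<And>x. h x = f [x]"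
    using assms unfolding pcomp_def by blast
  obtain C where C: "stage_approx 1 f C" using partrec_stage_approx[OF f] by blast
  define H where "H t y = C (npair t (code_cons y 0))" for t y
  have H_eq: "H t y = C (npair t (list_encode [y]))" for t y
    by (simp add: H_def code_cons_def)
  have "stage_approximation h H"
  proof
    fix t c v assume "H t c = Suc v"
    then show "h c = Some v" using stage_approx_sound[OF C, of "[c]" t v] by (simp add: H_eq h)
  next
    fix c v assume "h c = Some v"
    then show "eventually (\<lambda>t. H t c = Suc v) sequentially"
      using stage_approx_complete[OF C, of "[c]" v] by (simp add: H_eq h)
  qed
  moreover have "recursive1 (\<lambda>x. H (a x) (b x))" if "recursive1 a" "recursive1 b" for a b
    unfolding H_def
    by (intro recursive1_comp[OF stage_approx_recursive1[OF C]] recursive1_npair recursive1_code_cons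
        that recursive1_const)
  ultimately show ?thesis using that by blast
qed

lemma Gbeta_learner_imp_Psd_learner:
  assumes I: "R_monoid I" and "h \<in> I"
    and learns: "\<forall>L\<in>\<L>. learns_CautEx \<phi> Gbeta h L" and defined: "defined_on_Txt Gbeta h S"
  shows "\<exists>h\<in>I. (\<forall>L\<in>\<L>. learns_CautEx \<phi> Psd h L) \<and> defined_on_Txt Psd h S"
proof -
  have "pcomp h" using I \<open>h \<in> I\<close> unfolding R_monoid_def by blast
  then obtain H where H: "stage_approximation h H"
    and recursive_H: "\<And>a b. recursive1 a \<Longrightarrow> recursive1 b \<Longrightarrow> recursive1 (\<lambda>x. H (a x) (b x))"
    using pcomp_stage_approximation by blast
  have "(\<lambda>x. Some (locking_guess H x)) \<in> I"
    using recursive1_imp_Rfun[OF recursive1_locking_guess[OF recursive_H]] I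
    unfolding R_monoid_def by auto
  then have "h \<circ>\<^sub>m (\<lambda>x. Some (locking_guess H x)) \<in> I"
    using I \<open>h \<in> I\<close> unfolding R_monoid_def by auto
  moreover have "\<forall>L\<in>\<L>. learns_CautEx \<phi> Psd (h \<circ>\<^sub>m (\<lambda>x. Some (locking_guess H x))) L"
    using stage_approximation.Psd_locking_guess_learns[OF H] learns by blast
  moreover have "defined_on_Txt Psd (h \<circ>\<^sub>m (\<lambda>x. Some (locking_guess H x))) S"
    by (rule Psd_locking_guess_defined_on_Txt[OF defined])
  ultimately show ?thesis by blast
qed

theorem theorem6:
  fixes \<phi> :: "nat \<Rightarrow> nat \<Rightarrow> nat option"
    and I :: "(nat \<Rightarrow> nat option) set"
    and S :: "nat set set"
    and \<L> :: "nat set set"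
  assumes "acceptable \<phi>"
    and "R_monoid I"
    and "\<forall>A\<in>S. \<forall>B. B \<subseteq> A \<longrightarrow> B \<in> S"
  shows "(\<exists>h\<in>I. (\<forall>L\<in>\<L>. learns_CautEx \<phi> Gbeta h L) \<and> defined_on_Txt Gbeta h S)
     \<longleftrightarrow> (\<exists>h\<in>I. (\<forall>L\<in>\<L>. learns_CautEx \<phi> Psd h L) \<and> defined_on_Txt Psd h S)"
  using Gbeta_learner_imp_Psd_learner[OF assms(2)] Psd_learner_imp_Gbeta_learner[OF assms(2)] by blast

end
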